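(* Let $[a,b]\subset\mathbb R$ and $\mathcal J=\sum_{j=0}^{m}P_j\partial_z^j$ with constant $P_j\in\mathbb R^{n\times n}$, $P_j=(-1)^{j+1}P_j^\top$. Let $\mathcal G_R=\sum_{k=0}^{m_g}G_k\partial_z^k$ with $G_k\in\mathbb R^{n\times d_g}$, let $\mathcal G_R^*$ be its formal $L^2$-adjoint, and let $R\in C^\infty([a,b],\mathbb R^{d_g\times d_g})$ satisfy $\langle f,Rf\rangle_{L^2([a,b],\mathbb R^{d_g})}\ge0$ for all $f\in L^2([a,b],\mathbb R^{d_g})$. Let $\mathcal I=\{(i_1,j_1),\ldots,(i_l,j_l)\}\subset[1:n]\times[0:m_d]$ be distinct index pairs with $j_1\le\cdots\le j_l$, $H:\mathbb R^l\to\mathbb R$ smooth, and $\mathcal H(x)=\int_a^bH(\partial_z^{j_1}x_{i_1},\ldots,\partial_z^{j_l}x_{i_l})\,\mathrm dz$. Let $x$ be a sufficiently smooth solution of the dissipative Hamiltonian system $\dot x=(\mathcal J-\mathcal G_RR\mathcal G_R^* )\,\delta_x\mathcal H(x)$. Define $\bar x=(\partial_z^{j_1}x_{i_1},\ldots,\partial_z^{j_l}x_{i_l})^\top$ and $\bar{\mathcal H}(\bar x)=\int_a^bH(\bar x_1,\ldots,\bar x_l)\,\mathrm dz$ with $\bar x_1,\ldots,\bar x_l$ regarded as independent functions. Then $\bar x$ satisfies the dissipative Hamiltonian system $$\frac{\mathrm d}{\mathrm dt}\bar x=(\mathbb J-\mathbb G_RR\mathbb G_R^* )\,\delta_{\bar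 x}\bar{\mathcal H}(\bar x),$$ where $\mathbb J$ is the formally skew-adjoint $l\times l$ operator with entries $\mathbb J_{pq}=\partial_z^{j_p}\mathcal J_{i_pi_q}(-\partial_z)^{j_q}$, and $$\mathbb G_R=D_+\Big(\sum_{k=0}^{m_g}\begin{pmatrix}(G_k)_{i_1*}\\ \vdots\\ (G_k)_{i_l*}\end{pmatrix}\partial_z^k\Big),\qquad D_+=\operatorname{diag}(\partial_z^{j_1},\ldots,\partial_z^{j_l}),$$ with $\mathbb G_R^*$ its formal $L^2$-adjoint.
   Context: $\mathcal J_{ik}$ denotes the scalar operator $\sum_j(P_j)_{ik}\partial_z^j$ and $(G_k)_{i*}$ the $i$-th row of $G_k$. The variational derivative $\delta_x\mathcal H(x)$ is defined by $\frac{d}{d\varepsilon}\big|_{\varepsilon=0}\mathcal H(x+\varepsilon\eta)=\int_a^b\langle\delta_x\mathcal H(x),\eta\rangle_{\mathbb R^n}\,\mathrm dz$ for all $\eta\in H_0^{m_d}([a,b],\mathbb R^n)$; for $\bar{\mathcal H}$, $\delta_{\bar x}\bar{\mathcal H}(\bar x)=(\partial H/\partial y_1(\bar x),\ldots,\partial H/\partial y_l(\bar x))^\top$. Formal skew-adjointness means $\int_a^b\langle e,\mathbb Jf\rangle\,\mathrm dz=-\int_a^b\langle\mathbb Je,f\rangle\,\mathrm dz$ for smooth compactly supported $e,f$. *)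

theory Defs
  imports "HOL-Analysis.Analysis"
begin

definition Dz :: "nat \<Rightarrow> (real \<Rightarrow> real) \<Rightarrow> real \<Rightarrow> real" where
  "Dz k f = (deriv ^^ k) f"

definition Cinf_on :: "real set \<Rightarrow> (real \<Rightarrow> real) \<Rightarrow> bool" where
  "Cinf_on S g \<longleftrightarrow> (\<exists>D::nat \<Rightarrow> real \<Rightarrow> real. D 0 = g \<and>
     (\<forall>k. \<forall>z\<in>S. (D k has_real_derivative D (Suc k) z) (at z within S)))"

text \<open>Joint C-infinity of f(t,z) on an open set U: D p q stands for the
  partial derivative of order p in t and q in z.\<close>
definition Cinf2_on :: "(real \<times> real) set \<Rightarrow> (real \<Rightarrow> real \<Rightarrow> real) \<Rightarrow> bool" where
  "Cinf2_on U f \<longleftrightarrow> (\<exists>D::nat \<Rightarrow> nat \<Rightarrow> real \<Rightarrow> real \<Rightarrow> real. D 0 0 = f \<and>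
     (\<forall>p q. \<forall>y\<in>U. ((\<lambda>w. D p q (fst w) (snd w)) has_derivative
        (\<lambda>h. fst h * D (Suc p) q (fst y) (snd y) + snd h * D p (Suc q) (fst y) (snd y))) (at y)))"

definition Cinf_Rl :: "(real ^ 'l \<Rightarrow> real) \<Rightarrow> bool" where
  "Cinf_Rl H \<longleftrightarrow> (\<exists>D::'l list \<Rightarrow> real ^ 'l \<Rightarrow> real. D [] = H \<and>
     (\<forall>ds y p. ((\<lambda>s. D ds (y + s *\<^sub>R axis p 1)) has_real_derivative D (p # ds) y) (at 0)) \<and>
     (\<forall>ds. continuous_on UNIV (D ds)))"

definition pdH :: "(real ^ 'l \<Rightarrow> real) \<Rightarrow> 'l \<Rightarrow> real ^ 'l \<Rightarrow> real" where
  "pdH H p y = deriv (\<lambda>s. H (y + s *\<^sub>R axis p 1)) 0"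

definition test_fun :: "real \<Rightarrow> real \<Rightarrow> (real \<Rightarrow> real) \<Rightarrow> bool" where
  "test_fun a b g \<longleftrightarrow> (\<forall>k z. (deriv ^^ k) g differentiable (at z)) \<and>
     (\<exists>c d. a < c \<and> d < b \<and> (\<forall>z. z \<notin> {c..d} \<longrightarrow> g z = 0))"

definition L2_on :: "real \<Rightarrow> real \<Rightarrow> (real \<Rightarrow> real ^ 'd) \<Rightarrow> bool" where
  "L2_on a b f \<longleftrightarrow> f measurable_on {a..b} \<and> (\<lambda>z. (norm (f z))\<^sup>2) integrable_on {a..b}"

text \<open>xbar = (d_z^{j_1} x_{i_1}, ..., d_z^{j_l} x_{i_l}), with I p = (i_p, j_p).\<close>
definition xbar :: "('l \<Rightarrow> 'n \<times> nat) \<Rightarrow> (real \<Rightarrow> real ^ 'n) \<Rightarrow> real \<Rightarrow> real ^ 'l" where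
  "xbar I u z = (\<chi> p. Dz (snd (I p)) (\<lambda>w. u w $ fst (I p)) z)"

definition Hfun :: "real \<Rightarrow> real \<Rightarrow> ('l \<Rightarrow> 'n \<times> nat) \<Rightarrow> (real ^ 'l \<Rightarrow> real)
    \<Rightarrow> (real \<Rightarrow> real ^ 'n) \<Rightarrow> real" where
  "Hfun a b I H u = integral {a..b} (\<lambda>z. H (xbar I u z))"

definition is_var_deriv :: "real \<Rightarrow> real \<Rightarrow> ((real \<Rightarrow> real ^ 'n) \<Rightarrow> real)
    \<Rightarrow> (real \<Rightarrow> real ^ 'n) \<Rightarrow> (real \<Rightarrow> real ^ 'n) \<Rightarrow> bool" where
  "is_var_deriv a b F u e \<longleftrightarrow> (\<forall>\<eta>::real \<Rightarrow> real ^ 'n. (\<forall>i. test_fun a b (\<lambda>z. \<eta> z $ i)) \<longrightarrow>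
     ((\<lambda>\<epsilon>. F (\<lambda>z. u z + \<epsilon> *\<^sub>R \<eta> z)) has_real_derivative integral {a..b} (\<lambda>z. e z \<bullet> \<eta> z)) (at 0))"

definition Jop :: "nat \<Rightarrow> (nat \<Rightarrow> real ^ 'n ^ 'n) \<Rightarrow> (real \<Rightarrow> real ^ 'n) \<Rightarrow> real \<Rightarrow> real ^ 'n" where
  "Jop m P f z = (\<Sum>j\<le>m. P j *v (\<chi> k. Dz j (\<lambda>w. f w $ k) z))"

definition Gop :: "nat \<Rightarrow> (nat \<Rightarrow> real ^ 'd ^ 'n) \<Rightarrow> (real \<Rightarrow> real ^ 'd) \<Rightarrow> real \<Rightarrow> real ^ 'n" where
  "Gop mg G f z = (\<Sum>k\<le>mg. G k *v (\<chi> r. Dz k (\<lambda>w. f w $ r) z))"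

definition Gadj :: "nat \<Rightarrow> (nat \<Rightarrow> real ^ 'd ^ 'n) \<Rightarrow> (real \<Rightarrow> real ^ 'n) \<Rightarrow> real \<Rightarrow> real ^ 'd" where
  "Gadj mg G g z = (\<Sum>k\<le>mg. (-1) ^ k *\<^sub>R (\<chi> r. Dz k (\<lambda>w. (transpose (G k) *v g w) $ r) z))"

definition Rmul :: "(real \<Rightarrow> real ^ 'd ^ 'd) \<Rightarrow> (real \<Rightarrow> real ^ 'd) \<Rightarrow> real \<Rightarrow> real ^ 'd" where
  "Rmul R f z = R z *v f z"

definition JJop :: "nat \<Rightarrow> (nat \<Rightarrow> real ^ 'n ^ 'n) \<Rightarrow> ('l \<Rightarrow> 'n \<times> nat)
    \<Rightarrow> (real \<Rightarrow> real ^ 'l) \<Rightarrow> real \<Rightarrow> real ^ 'l" where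
  "JJop m P I g z = (\<chi> p. Dz (snd (I p)) (\<lambda>w. \<Sum>q\<in>UNIV. \<Sum>j\<le>m.
      P j $ fst (I p) $ fst (I q) *
        Dz j (\<lambda>w'. (-1) ^ snd (I q) * Dz (snd (I q)) (\<lambda>u. g u $ q) w') w) z)"

definition GGop :: "nat \<Rightarrow> (nat \<Rightarrow> real ^ 'd ^ 'n) \<Rightarrow> ('l \<Rightarrow> 'n \<times> nat)
    \<Rightarrow> (real \<Rightarrow> real ^ 'd) \<Rightarrow> real \<Rightarrow> real ^ 'l" where
  "GGop mg G I f z = (\<chi> p. Dz (snd (I p)) (\<lambda>w. \<Sum>k\<le>mg. \<Sum>r\<in>UNIV.
      G k $ fst (I p) $ r * Dz k (\<lambda>w'. f w' $ r) w) z)"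

text \<open>formal L^2 adjoint: GG_R^* = (sum_k (-d_z)^k Ghat_k^T) diag((-d_z)^{j_1},...,(-d_z)^{j_l})\<close>
definition GGadj :: "nat \<Rightarrow> (nat \<Rightarrow> real ^ 'd ^ 'n) \<Rightarrow> ('l \<Rightarrow> 'n \<times> nat)
    \<Rightarrow> (real \<Rightarrow> real ^ 'l) \<Rightarrow> real \<Rightarrow> real ^ 'd" where
  "GGadj mg G I g z = (\<chi> r. \<Sum>k\<le>mg. (-1) ^ k * Dz k (\<lambda>w. \<Sum>p\<in>UNIV.
      G k $ fst (I p) $ r * ((-1) ^ snd (I p) * Dz (snd (I p)) (\<lambda>u. g u $ p) w)) z)"

end

theory Submission
  imports Defs
begin

(* Because the reduced Hamiltonian depends on x only through xbar = (d_z^(j_p) x_(i_p))_p, the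
   first variation of Hfun along a test function eta is the integral of
   sum_p d_z^(j_p) eta_(i_p) * dH/dy_p(xbar).  Integrating by parts and applying the fundamental
   lemma of the calculus of variations identifies the variational derivative as
   delta_x Hfun = sum_p e_(i_p) (-d_z)^(j_p) dH/dy_p(xbar), the formal adjoint of x |-> xbar
   applied to delta_xbar Hbar.  Substituting this into the evolution equation and differentiating
   its i_p-th component j_p times in z, which commutes with d_t because x is jointly smooth,
   produces the p-th component of the reduced system.  Skew-adjointness of JJ is a direct
   integration by parts against test functions. *)

section \<open>Smooth functions of one real variable\<close>

definition differentiable_upto_on :: "nat \<Rightarrow> real set \<Rightarrow> (real \<Rightarrow> real) \<Rightarrow> bool" where
  "differentiable_upto_on n S f \<longleftrightarrow> (\<forall>k<n. \<forall>z\<in>S. (deriv ^^ k) f differentiable (at z))"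

definition smooth_on :: "real set \<Rightarrow> (real \<Rightarrow> real) \<Rightarrow> bool" where
  "smooth_on S f \<longleftrightarrow> (\<forall>k. \<forall>z\<in>S. (deriv ^^ k) f differentiable (at z))"

lemma smooth_on_iff_differentiable_upto_on: "smooth_on S f \<longleftrightarrow> (\<forall>n. differentiable_upto_on n S f)"
  unfolding smooth_on_def differentiable_upto_on_def by (meson lessI)

lemma higher_deriv_Suc: "(deriv ^^ Suc k) f = (deriv ^^ k) (deriv f)"
  by (simp only: funpow_Suc_right comp_def)

lemma higher_deriv_higher_deriv: "(deriv ^^ j) ((deriv ^^ k) f) = (deriv ^^ (j + k)) f"
  by (simp add: funpow_add)

lemma differentiable_upto_on_0 [simp]: "differentiable_upto_on 0 S f"
  by (simp add: differentiable_upto_on_def)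

lemma differentiable_upto_on_Suc:
  "differentiable_upto_on (Suc n) S f \<longleftrightarrow>
     (\<forall>z\<in>S. f differentiable (at z)) \<and> differentiable_upto_on n S (deriv f)"
  unfolding differentiable_upto_on_def
  by (auto simp: higher_deriv_Suc less_Suc_eq_0_disj simp del: funpow.simps)

lemma deriv_cong_open:
  "open S \<Longrightarrow> (\<And>z. z \<in> S \<Longrightarrow> f z = g z) \<Longrightarrow> z \<in> S \<Longrightarrow> deriv f z = deriv g z"
  by (rule deriv_cong_ev) (auto elim!: eventually_mono[OF eventually_nhds_in_open])

lemma differentiable_cong_open:
  "open S \<Longrightarrow> (\<And>z. z \<in> S \<Longrightarrow> f z = g z) \<Longrightarrow> z \<in> S \<Longrightarrow>
     (f :: real \<Rightarrow> real) differentiable (at z) \<Longrightarrow> g differentiable (at z)"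
  unfolding real_differentiable_def using has_field_derivative_transform_within_open by blast

lemma higher_deriv_cong_open:
  "open S \<Longrightarrow> (\<And>z. z \<in> S \<Longrightarrow> f z = g z) \<Longrightarrow> z \<in> S \<Longrightarrow> (deriv ^^ k) f z = (deriv ^^ k) g z"
proof (induction k arbitrary: f g z)
  case (Suc k)
  have "(deriv ^^ k) (deriv f) z = (deriv ^^ k) (deriv g) z"
    by (rule Suc.IH[OF Suc.prems(1) deriv_cong_open[OF Suc.prems(1,2)] Suc.prems(3)])
  then show ?case by (simp only: higher_deriv_Suc)
qed simp

lemma differentiable_upto_on_cong:
  assumes S: "open S" and fg: "\<And>z. z \<in> S \<Longrightarrow> f z = g z" and f: "differentiable_upto_on n S f"
  shows "differentiable_upto_on n S g"
  unfolding differentiable_upto_on_def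
proof safe
  fix k z assume "k < n" "z \<in> S"
  have "(deriv ^^ k) f differentiable (at z)"
    using f \<open>k < n\<close> \<open>z \<in> S\<close> by (simp add: differentiable_upto_on_def)
  moreover have "(deriv ^^ k) f w = (deriv ^^ k) g w" if "w \<in> S" for w
    by (rule higher_deriv_cong_open[OF S fg that])
  ultimately show "(deriv ^^ k) g differentiable (at z)"
    using differentiable_cong_open[OF S] \<open>z \<in> S\<close> by blast
qed

lemma differentiable_upto_on_const: "differentiable_upto_on n S (\<lambda>z. c)"
  by (induction n arbitrary: c) (auto simp: differentiable_upto_on_Suc)

lemma differentiable_upto_on_derivI:
  assumes S: "open S" and f': "\<And>z. z \<in> S \<Longrightarrow> (f has_real_derivative f' z) (at z)"
    and "differentiable_upto_on n S f'"
  shows "differentiable_upto_on (Suc n) S f"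
proof -
  have "differentiable_upto_on n S (deriv f)"
    using differentiable_upto_on_cong[OF S _ assms(3)] f' DERIV_imp_deriv by metis
  then show ?thesis
    using f' by (auto simp: differentiable_upto_on_Suc real_differentiable_def)
qed

lemma smooth_on_has_real_derivative:
  "smooth_on S f \<Longrightarrow> z \<in> S \<Longrightarrow> (f has_real_derivative deriv f z) (at z)"
  unfolding smooth_on_def
  by (metis DERIV_deriv_iff_real_differentiable funpow_0)

lemma smooth_on_deriv: "smooth_on S f \<Longrightarrow> smooth_on S (deriv f)"
  unfolding smooth_on_def by (metis higher_deriv_Suc)

lemma smooth_on_higher_deriv: "smooth_on S f \<Longrightarrow> smooth_on S ((deriv ^^ k) f)"
  by (induction k) (auto simp: smooth_on_deriv)

lemma differentiable_upto_on_add: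
  "open S \<Longrightarrow> differentiable_upto_on n S f \<Longrightarrow> differentiable_upto_on n S g \<Longrightarrow>
     differentiable_upto_on n S (\<lambda>z. f z + g z)"
proof (induction n arbitrary: f g)
  case (Suc n)
  then have "differentiable_upto_on n S (\<lambda>z. deriv f z + deriv g z)"
    by (simp add: differentiable_upto_on_Suc)
  moreover have "((\<lambda>z. f z + g z) has_real_derivative deriv f z + deriv g z) (at z)" if "z \<in> S" for z
    using Suc.prems that by (auto intro!: DERIV_add simp: differentiable_upto_on_Suc
        DERIV_deriv_iff_real_differentiable)
  ultimately show ?case by (rule differentiable_upto_on_derivI[OF Suc.prems(1), rotated])
qed simp

lemma differentiable_upto_on_mult:
  "open S \<Longrightarrow> differentiable_upto_on n S f \<Longrightarrow> differentiable_upto_on n S g \<Longrightarrow>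
     differentiable_upto_on n S (\<lambda>z. f z * g z)"
proof (induction n arbitrary: f g)
  case (Suc n)
  have "differentiable_upto_on n S f" "differentiable_upto_on n S g"
    using Suc.prems by (auto simp: differentiable_upto_on_def)
  then have "differentiable_upto_on n S (\<lambda>z. f z * deriv g z + deriv f z * g z)"
    using Suc by (intro differentiable_upto_on_add) (auto simp: differentiable_upto_on_Suc)
  moreover have "((\<lambda>z. f z * g z) has_real_derivative f z * deriv g z + deriv f z * g z) (at z)"
    if "z \<in> S" for z
    using Suc.prems that by (auto intro!: DERIV_mult' simp: differentiable_upto_on_Suc
        DERIV_deriv_iff_real_differentiable)
  ultimately show ?case by (rule differentiable_upto_on_derivI[OF Suc.prems(1), rotated])
qed simp

lemma differentiable_upto_on_sum:
  "finite A \<Longrightarrow> open S \<Longrightarrow> (\<And>a. a \<in> A \<Longrightarrow> differentiable_upto_on n S (f a)) \<Longrightarrow>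
     differentiable_upto_on n S (\<lambda>z. \<Sum>a\<in>A. f a z)"
  by (induction A rule: finite_induct)
     (auto intro!: differentiable_upto_on_add differentiable_upto_on_const)

lemma smooth_on_const: "smooth_on S (\<lambda>z. c)"
  by (simp add: smooth_on_iff_differentiable_upto_on differentiable_upto_on_const)

lemma smooth_on_add: "open S \<Longrightarrow> smooth_on S f \<Longrightarrow> smooth_on S g \<Longrightarrow> smooth_on S (\<lambda>z. f z + g z)"
  by (simp add: smooth_on_iff_differentiable_upto_on differentiable_upto_on_add)

lemma smooth_on_mult: "open S \<Longrightarrow> smooth_on S f \<Longrightarrow> smooth_on S g \<Longrightarrow> smooth_on S (\<lambda>z. f z * g z)"
  by (simp add: smooth_on_iff_differentiable_upto_on differentiable_upto_on_mult)

lemma smooth_on_cmult: "open S \<Longrightarrow> smooth_on S f \<Longrightarrow> smooth_on S (\<lambda>z. c * f z)"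
  by (rule smooth_on_mult[OF _ smooth_on_const])

lemma smooth_on_diff: "open S \<Longrightarrow> smooth_on S f \<Longrightarrow> smooth_on S g \<Longrightarrow> smooth_on S (\<lambda>z. f z - g z)"
  using smooth_on_add[of S f "\<lambda>z. -1 * g z"] smooth_on_cmult[of S g "-1"] by simp

lemma smooth_on_sum:
  "finite A \<Longrightarrow> open S \<Longrightarrow> (\<And>a. a \<in> A \<Longrightarrow> smooth_on S (f a)) \<Longrightarrow> smooth_on S (\<lambda>z. \<Sum>a\<in>A. f a z)"
  by (simp add: smooth_on_iff_differentiable_upto_on differentiable_upto_on_sum)

lemma smooth_on_subset: "T \<subseteq> S \<Longrightarrow> smooth_on S f \<Longrightarrow> smooth_on T f"
  unfolding smooth_on_def by blast

lemma smooth_on_continuous_on: "smooth_on S f \<Longrightarrow> T \<subseteq> S \<Longrightarrow> continuous_on T f"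
  by (meson DERIV_isCont continuous_at_imp_continuous_on smooth_on_has_real_derivative subsetD)

lemma higher_deriv_add:
  assumes "open S" "smooth_on S f" "smooth_on S g" "z \<in> S"
  shows "(deriv ^^ k) (\<lambda>z. f z + g z) z = (deriv ^^ k) f z + (deriv ^^ k) g z"
  using assms
proof (induction k arbitrary: f g)
  case (Suc k)
  have "(deriv ^^ k) (deriv (\<lambda>z. f z + g z)) z = (deriv ^^ k) (\<lambda>z. deriv f z + deriv g z) z"
    using Suc.prems
    by (intro higher_deriv_cong_open[of S] DERIV_imp_deriv DERIV_add smooth_on_has_real_derivative)
  also have "\<dots> = (deriv ^^ k) (deriv f) z + (deriv ^^ k) (deriv g) z"
    using Suc by (simp add: smooth_on_deriv)
  finally show ?case by (simp only: higher_deriv_Suc)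
qed simp

lemma higher_deriv_cmult:
  assumes "open S" "smooth_on S f" "z \<in> S"
  shows "(deriv ^^ k) (\<lambda>z. c * f z) z = c * (deriv ^^ k) f z"
  using assms
proof (induction k arbitrary: f)
  case (Suc k)
  have "(deriv ^^ k) (deriv (\<lambda>z. c * f z)) z = (deriv ^^ k) (\<lambda>z. c * deriv f z) z"
    using Suc.prems
    by (intro higher_deriv_cong_open[of S] DERIV_imp_deriv DERIV_cmult smooth_on_has_real_derivative)
  also have "\<dots> = c * (deriv ^^ k) (deriv f) z"
    using Suc by (simp add: smooth_on_deriv)
  finally show ?case by (simp only: higher_deriv_Suc)
qed simp

lemma higher_deriv_diff:
  assumes "open S" "smooth_on S f" "smooth_on S g" "z \<in> S"
  shows "(deriv ^^ k) (\<lambda>z. f z - g z) z = (deriv ^^ k) f z - (deriv ^^ k) g z"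
proof -
  have "(deriv ^^ k) (\<lambda>z. f z + -1 * g z) z = (deriv ^^ k) f z + -1 * (deriv ^^ k) g z"
    by (simp only: higher_deriv_add[OF assms(1,2) smooth_on_cmult[OF assms(1,3)] assms(4)]
        higher_deriv_cmult[OF assms(1,3,4)])
  then show ?thesis by simp
qed

lemma higher_deriv_zero: "(deriv ^^ k) (\<lambda>z. 0 :: real) = (\<lambda>z. 0)"
  by (induction k) auto

lemma higher_deriv_sum:
  assumes "finite A" "open S" "\<And>a. a \<in> A \<Longrightarrow> smooth_on S (f a)" "z \<in> S"
  shows "(deriv ^^ k) (\<lambda>z. \<Sum>a\<in>A. f a z) z = (\<Sum>a\<in>A. (deriv ^^ k) (f a) z)"
  using assms
  by (induction A rule: finite_induct)
     (simp_all add: higher_deriv_zero higher_deriv_add smooth_on_sum)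

lemma smooth_on_derivative_tower:
  assumes S: "open S" and D0: "D 0 = f"
    and D: "\<And>k z. z \<in> S \<Longrightarrow> (D k has_real_derivative D (Suc k) z) (at z)"
  shows "smooth_on S f" and "\<And>k z. z \<in> S \<Longrightarrow> (deriv ^^ k) f z = D k z"
proof -
  show eq: "(deriv ^^ k) f z = D k z" if "z \<in> S" for k z
    using that
  proof (induction k arbitrary: z)
    case (Suc k)
    have "deriv ((deriv ^^ k) f) z = deriv (D k) z"
      by (rule deriv_cong_open[OF S Suc.IH Suc.prems])
    also have "\<dots> = D (Suc k) z"
      using D[OF Suc.prems] by (rule DERIV_imp_deriv)
    finally show ?case by simp
  qed (simp add: D0)
  show "smooth_on S f"
    unfolding smooth_on_def
  proof (intro allI ballI)
    fix k z assume "z \<in> S"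
    have "D k differentiable (at z)"
      using D[OF \<open>z \<in> S\<close>] real_differentiable_def by blast
    moreover have "D k w = (deriv ^^ k) f w" if "w \<in> S" for w
      using eq[OF that] by simp
    ultimately show "(deriv ^^ k) f differentiable (at z)"
      using differentiable_cong_open[OF S] \<open>z \<in> S\<close> by blast
  qed
qed

lemma smooth_on_compose:
  assumes S: "open S" and \<phi>: "smooth_on UNIV \<phi>" and g: "smooth_on S g"
  shows "smooth_on S (\<lambda>z. \<phi> (g z))"
proof -
  have "differentiable_upto_on n S (\<lambda>z. (deriv ^^ k) \<phi> (g z))" for n k
  proof (induction n arbitrary: k)
    case (Suc n)
    have "differentiable_upto_on n S (\<lambda>z. (deriv ^^ Suc k) \<phi> (g z) * deriv g z)"
      using smooth_on_deriv[OF g]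
      by (intro differentiable_upto_on_mult[OF S Suc.IH]) (simp add: smooth_on_iff_differentiable_upto_on)
    moreover have "((\<lambda>z. (deriv ^^ k) \<phi> (g z)) has_real_derivative
        (deriv ^^ Suc k) \<phi> (g z) * deriv g z) (at z)" if "z \<in> S" for z
      using DERIV_chain2[OF smooth_on_has_real_derivative[OF smooth_on_higher_deriv[OF \<phi>]]
          smooth_on_has_real_derivative[OF g that]] by simp
    ultimately show ?case by (rule differentiable_upto_on_derivI[OF S, rotated])
  qed simp
  from this[of _ 0] show ?thesis by (simp add: smooth_on_iff_differentiable_upto_on)
qed

section \<open>Functions of several real variables\<close>

lemma has_real_derivative_along_axis:
  fixes F :: "real ^ 'l \<Rightarrow> real"
  assumes F': "\<And>y. ((\<lambda>s. F (y + s *\<^sub>R axis p 1)) has_real_derivative F' y) (at 0)"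
  shows "((\<lambda>s. F (z + s *\<^sub>R axis p 1)) has_real_derivative F' (z + t *\<^sub>R axis p 1)) (at t)"
proof -
  have "((\<lambda>u. F ((z + t *\<^sub>R axis p 1) + u *\<^sub>R axis p 1)) has_real_derivative
      F' (z + t *\<^sub>R axis p 1)) (at 0)"
    by (rule F')
  then have "((\<lambda>u. F (z + (u + t) *\<^sub>R axis p 1)) has_real_derivative F' (z + t *\<^sub>R axis p 1)) (at 0)"
    by (simp add: scaleR_add_left algebra_simps)
  then show ?thesis
    using DERIV_shift[of "\<lambda>s. F (z + s *\<^sub>R axis p 1)" _ 0 t] by simp
qed

lemma axis_increment_bound:
  fixes F :: "real ^ 'l \<Rightarrow> real"
  assumes F': "\<And>y. ((\<lambda>s. F (y + s *\<^sub>R axis p 1)) has_real_derivative F' y) (at 0)"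
    and bound: "\<And>\<theta>. \<bar>\<theta>\<bar> \<le> \<bar>t\<bar> \<Longrightarrow> \<bar>F' (z + \<theta> *\<^sub>R axis p 1) - c\<bar> \<le> \<epsilon>"
  shows "\<bar>F (z + t *\<^sub>R axis p 1) - F z - t * c\<bar> \<le> \<epsilon> * \<bar>t\<bar>"
proof -
  define g where "g s = F (z + s *\<^sub>R axis p 1) - s * c" for s
  have "norm (g t - g 0) \<le> \<epsilon> * norm (t - 0)"
  proof (rule field_differentiable_bound[of "cball 0 \<bar>t\<bar>"])
    fix s
    show "(g has_real_derivative F' (z + s *\<^sub>R axis p 1) - c) (at s within cball 0 \<bar>t\<bar>)"
      unfolding g_def
      by (rule has_field_derivative_at_within, rule DERIV_diff[OF has_real_derivative_along_axis[OF F']])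
         (auto intro!: derivative_eq_intros)
    assume "s \<in> cball 0 \<bar>t\<bar>"
    then show "norm (F' (z + s *\<^sub>R axis p 1) - c) \<le> \<epsilon>"
      using bound by auto
  qed auto
  then show ?thesis by (simp add: g_def)
qed

definition axis_part :: "'l set \<Rightarrow> real ^ 'l \<Rightarrow> real ^ 'l" where
  "axis_part K v = (\<Sum>p\<in>K. (v $ p) *\<^sub>R axis p 1)"

lemma axis_part_component: "finite K \<Longrightarrow> axis_part K v $ i = (if i \<in> K then v $ i else 0)"
  unfolding axis_part_def by (induction K rule: finite_induct) (auto simp: axis_def)

lemma axis_part_UNIV: "axis_part (UNIV :: 'l :: finite set) v = v"
  by (simp add: vec_eq_iff axis_part_component)

text \<open>Moving from \<open>y\<close> to \<open>y + v\<close> one coordinate at a time, each step is controlled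
  by the mean value theorem.\<close>

lemma axis_part_increment_bound:
  fixes F :: "real ^ 'l \<Rightarrow> real"
  assumes F': "\<And>y p. ((\<lambda>s. F (y + s *\<^sub>R axis p 1)) has_real_derivative F' p y) (at 0)"
    and close: "\<And>w p. norm (w - y) \<le> norm v \<Longrightarrow> \<bar>F' p w - F' p y\<bar> \<le> \<epsilon>"
    and K: "finite K"
  shows "\<bar>F (y + axis_part K v) - F y - (\<Sum>p\<in>K. v $ p * F' p y)\<bar> \<le> \<epsilon> * (\<Sum>p\<in>K. \<bar>v $ p\<bar>)"
  using K
proof (induction K rule: finite_induct)
  case (insert p K)
  have step: "axis_part (insert p K) v = axis_part K v + (v $ p) *\<^sub>R axis p 1"
    using insert by (simp add: axis_part_def add.commute)
  have "\<bar>F' p ((y + axis_part K v) + \<theta> *\<^sub>R axis p 1) - F' p y\<bar> \<le> \<epsilon>" if "\<bar>\<theta>\<bar> \<le> \<bar>v $ p\<bar>" for \<theta>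
  proof -
    have "norm (axis_part K v + \<theta> *\<^sub>R axis p 1) \<le> norm v"
      by (rule norm_le_componentwise_cart) (use insert that in \<open>auto simp: axis_part_component axis_def\<close>)
    then show ?thesis
      using close[of "(y + axis_part K v) + \<theta> *\<^sub>R axis p 1"] by (simp add: add.assoc)
  qed
  then have "\<bar>F ((y + axis_part K v) + v $ p *\<^sub>R axis p 1) - F (y + axis_part K v) - v $ p * F' p y\<bar>
      \<le> \<epsilon> * \<bar>v $ p\<bar>"
    by (rule axis_increment_bound[OF F'])
  then show ?case
    using insert step by (simp add: algebra_simps)
qed (simp add: axis_part_def)

lemma has_derivative_continuous_partials:
  fixes F :: "real ^ 'l \<Rightarrow> real" and F' :: "'l \<Rightarrow> real ^ 'l \<Rightarrow> real"
  assumes F': "\<And>y p. ((\<lambda>s. F (y + s *\<^sub>R axis p 1)) has_real_derivative F' p y) (at 0)"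
    and cont: "\<And>p. continuous_on UNIV (F' p)"
  shows "(F has_derivative (\<lambda>h. \<Sum>p\<in>UNIV. h $ p * F' p y)) (at y)"
  unfolding has_derivative_at_alt
proof safe
  show "bounded_linear (\<lambda>h. \<Sum>p\<in>UNIV. h $ p * F' p y)"
    by (intro bounded_linear_sum bounded_linear_mult_const bounded_linear_vec_nth)
  fix e :: real assume "e > 0"
  define N where "N = real CARD('l)"
  have N: "N > 0" by (simp add: N_def)
  define \<epsilon> where "\<epsilon> = e / N"
  have "\<epsilon> > 0" using N \<open>e > 0\<close> by (simp add: \<epsilon>_def)
  have "\<forall>\<^sub>F w in nhds y. \<bar>F' p w - F' p y\<bar> < \<epsilon>" for p
  proof -
    have "isCont (F' p) y"
      using cont continuous_on_eq_continuous_at by blast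
    then have "(F' p \<longlongrightarrow> F' p y) (nhds y)"
      by (simp add: isCont_def tendsto_at_iff_tendsto_nhds)
    from tendstoD[OF this \<open>\<epsilon> > 0\<close>] show ?thesis by (simp add: dist_real_def)
  qed
  then have "\<forall>\<^sub>F w in nhds y. \<forall>p. \<bar>F' p w - F' p y\<bar> < \<epsilon>"
    by (rule eventually_all_finite)
  then obtain d where d: "d > 0" "\<And>w. dist w y < d \<Longrightarrow> \<forall>p. \<bar>F' p w - F' p y\<bar> < \<epsilon>"
    unfolding eventually_nhds_metric by blast
  show "\<exists>d>0. \<forall>y'. norm (y' - y) < d \<longrightarrow>
      norm (F y' - F y - (\<Sum>p\<in>UNIV. (y' - y) $ p * F' p y)) \<le> e * norm (y' - y)"
  proof (intro exI[of _ d] conjI allI impI)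
    fix y' assume y': "norm (y' - y) < d"
    have "\<bar>F' p w - F' p y\<bar> \<le> \<epsilon>" if "norm (w - y) \<le> norm (y' - y)" for w p
      using d(2)[of w] that y' by (simp add: dist_norm less_imp_le)
    from axis_part_increment_bound[where v = "y' - y" and K = UNIV, OF F' this finite]
    have "norm (F y' - F y - (\<Sum>p\<in>UNIV. (y' - y) $ p * F' p y)) \<le> \<epsilon> * (\<Sum>p\<in>UNIV. \<bar>(y' - y) $ p\<bar>)"
      by (simp add: axis_part_UNIV)
    also have "\<dots> \<le> \<epsilon> * (N * norm (y' - y))"
      unfolding N_def using \<open>\<epsilon> > 0\<close> component_le_norm_cart[of "y' - y"]
      by (intro mult_left_mono sum_bounded_above[of UNIV _ "norm (y' - y)", simplified]) auto
    also have "\<dots> = e * norm (y' - y)"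
      using N by (simp add: \<epsilon>_def)
    finally show "norm (F y' - F y - (\<Sum>p\<in>UNIV. (y' - y) $ p * F' p y)) \<le> e * norm (y' - y)" .
  qed (rule d(1))
qed

lemma has_vector_derivative_vec_iff:
  fixes Y :: "real \<Rightarrow> real ^ 'l"
  shows "(Y has_vector_derivative Y') (at w) \<longleftrightarrow>
           (\<forall>p. ((\<lambda>w. Y w $ p) has_real_derivative Y' $ p) (at w))"
proof
  assume "(Y has_vector_derivative Y') (at w)"
  then have "((\<lambda>s. Y s $ p) has_derivative (\<lambda>h. (h *\<^sub>R Y') $ p)) (at w)" for p
    using bounded_linear.has_derivative[OF bounded_linear_vec_nth] unfolding has_vector_derivative_def
    by blast
  then show "\<forall>p. ((\<lambda>w. Y w $ p) has_real_derivative Y' $ p) (at w)"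
    by (simp add: has_real_derivative_iff_has_vector_derivative has_vector_derivative_def)
next
  assume Y': "\<forall>p. ((\<lambda>w. Y w $ p) has_real_derivative Y' $ p) (at w)"
  have "((\<lambda>x. Y x \<bullet> i) has_derivative (\<lambda>h. h *\<^sub>R Y' \<bullet> i)) (at w)" if "i \<in> Basis" for i
  proof -
    obtain p where i: "i = axis p 1" using \<open>i \<in> Basis\<close> by (auto simp: Basis_vec_def)
    show ?thesis
      using Y' unfolding i inner_axis
      by (simp add: has_real_derivative_iff_has_vector_derivative has_vector_derivative_def)
  qed
  then show "(Y has_vector_derivative Y') (at w)"
    unfolding has_vector_derivative_def has_derivative_componentwise_within[of Y] by blast
qed

lemma has_real_derivative_compose_curve:
  fixes F :: "real ^ 'l \<Rightarrow> real" and Y :: "real \<Rightarrow> real ^ 'l"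
  assumes F: "(F has_derivative (\<lambda>h. \<Sum>p\<in>UNIV. h $ p * F' p (Y w))) (at (Y w))"
    and Y: "\<And>p. ((\<lambda>w. Y w $ p) has_real_derivative Y' p) (at w)"
  shows "((\<lambda>w. F (Y w)) has_real_derivative (\<Sum>p\<in>UNIV. Y' p * F' p (Y w))) (at w)"
proof -
  have "(Y has_derivative (\<lambda>h. h *\<^sub>R (\<chi> p. Y' p))) (at w)"
    using Y has_vector_derivative_vec_iff[of Y "\<chi> p. Y' p"] by (simp add: has_vector_derivative_def)
  from diff_chain_at[OF this F] show ?thesis
    by (simp add: o_def has_real_derivative_iff_has_vector_derivative has_vector_derivative_def
        sum_distrib_left mult_ac)
qed

lemma Cinf_Rl_partial:
  assumes "Cinf_Rl F"
  shows "((\<lambda>s. F (y + s *\<^sub>R axis p 1)) has_real_derivative pdH F p y) (at 0)"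
proof -
  obtain D where "D [] = F" "\<And>y. ((\<lambda>s. D [] (y + s *\<^sub>R axis p 1)) has_real_derivative D [p] y) (at 0)"
    using assms unfolding Cinf_Rl_def by blast
  then show ?thesis by (metis DERIV_imp_deriv pdH_def)
qed

lemma Cinf_Rl_pdH:
  assumes "Cinf_Rl F"
  shows "Cinf_Rl (pdH F p)"
proof -
  obtain D where D: "D [] = F"
    "\<forall>ds y p. ((\<lambda>s. D ds (y + s *\<^sub>R axis p 1)) has_real_derivative D (p # ds) y) (at 0)"
    "\<forall>ds. continuous_on UNIV (D ds)"
    using assms unfolding Cinf_Rl_def by blast
  have "pdH F p = D [p]"
    using D(1,2) by (metis DERIV_imp_deriv pdH_def ext)
  then show ?thesis
    unfolding Cinf_Rl_def using D(2,3) by (intro exI[of _ "\<lambda>ds. D (ds @ [p])"]) simp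
qed

lemma Cinf_Rl_continuous_on: "Cinf_Rl F \<Longrightarrow> continuous_on UNIV F"
  unfolding Cinf_Rl_def by metis

lemma Cinf_Rl_has_derivative:
  "Cinf_Rl F \<Longrightarrow> (F has_derivative (\<lambda>h. \<Sum>p\<in>UNIV. h $ p * pdH F p y)) (at y)"
  by (intro has_derivative_continuous_partials Cinf_Rl_partial Cinf_Rl_continuous_on Cinf_Rl_pdH)

lemma smooth_on_Cinf_Rl_compose:
  fixes F :: "real ^ 'l \<Rightarrow> real" and Y :: "real \<Rightarrow> real ^ 'l"
  assumes F: "Cinf_Rl F" and S: "open S" and Y: "\<And>p. smooth_on S (\<lambda>w. Y w $ p)"
  shows "smooth_on S (\<lambda>w. F (Y w))"
proof -
  have "differentiable_upto_on n S (\<lambda>w. F (Y w))" if "Cinf_Rl F" for n and F :: "real ^ 'l \<Rightarrow> real"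
    using that
  proof (induction n arbitrary: F)
    case (Suc n)
    have "differentiable_upto_on n S (\<lambda>w. pdH F p (Y w))" for p
      by (rule Suc.IH[OF Cinf_Rl_pdH[OF Suc.prems]])
    then have "differentiable_upto_on n S (\<lambda>w. \<Sum>p\<in>UNIV. deriv (\<lambda>w. Y w $ p) w * pdH F p (Y w))"
      using smooth_on_deriv[OF Y]
      by (intro differentiable_upto_on_sum[OF _ S] differentiable_upto_on_mult[OF S])
         (simp_all add: smooth_on_iff_differentiable_upto_on)
    moreover have "((\<lambda>w. F (Y w)) has_real_derivative
        (\<Sum>p\<in>UNIV. deriv (\<lambda>w. Y w $ p) w * pdH F p (Y w))) (at w)" if "w \<in> S" for w
      by (intro has_real_derivative_compose_curve Cinf_Rl_has_derivative[OF Suc.prems]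
          smooth_on_has_real_derivative[OF Y that])
    ultimately show ?case by (rule differentiable_upto_on_derivI[OF S, rotated])
  qed simp
  with F show ?thesis by (simp add: smooth_on_iff_differentiable_upto_on)
qed

section \<open>Test functions and the fundamental lemma of the calculus of variations\<close>

lemma poly_times_exp_minus_tendsto_0: "((\<lambda>u. poly p u * exp (- u)) \<longlongrightarrow> (0 :: real)) at_top"
proof -
  have "((\<lambda>u. \<Sum>i\<le>degree p. coeff p i * (u ^ i / exp u)) \<longlongrightarrow> (\<Sum>i\<le>degree p. coeff p i * 0)) at_top"
    by (intro tendsto_sum tendsto_mult tendsto_const tendsto_power_div_exp_0)
  moreover have "(\<lambda>u. \<Sum>i\<le>degree p. coeff p i * (u ^ i / exp u)) = (\<lambda>u. poly p u * exp (- u))"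
    by (rule ext) (simp add: poly_altdef sum_distrib_right exp_minus divide_inverse mult.assoc)
  ultimately show ?thesis by simp
qed

lemma poly_inverse_times_exp_tendsto_0:
  "((\<lambda>x. poly p (1 / x) * exp (- (1 / x))) \<longlongrightarrow> (0 :: real)) (at_right 0)"
proof -
  have "filterlim (\<lambda>x :: real. 1 / x) at_top (at_right 0)"
    using filterlim_inverse_at_top_right by (simp add: inverse_eq_divide)
  from filterlim_compose[OF poly_times_exp_minus_tendsto_0 this] show ?thesis by (simp add: o_def)
qed

text \<open>On \<open>x > 0\<close> the \<open>k\<close>-th derivative of \<open>exp (- 1 / x)\<close> is
  \<open>poly (flat_poly k) (1 / x) * exp (- 1 / x)\<close>, which tends to \<open>0\<close> at \<open>0\<close>; so extending by \<open>0\<close>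
  gives a smooth function vanishing on \<open>x \<le> 0\<close>.\<close>

fun flat_poly :: "nat \<Rightarrow> real poly" where
  "flat_poly 0 = 1"
| "flat_poly (Suc k) = [:0, 0, 1:] * (flat_poly k - pderiv (flat_poly k))"

definition flat_deriv :: "nat \<Rightarrow> real \<Rightarrow> real" where
  "flat_deriv k x = (if x > 0 then poly (flat_poly k) (1 / x) * exp (- (1 / x)) else 0)"

lemma has_real_derivative_poly_inverse_times_exp:
  assumes "x > 0"
  shows "((\<lambda>x. poly q (1 / x) * exp (- (1 / x))) has_real_derivative
           poly ([:0, 0, 1:] * (q - pderiv q)) (1 / x) * exp (- (1 / x))) (at x)"
proof -
  have inv: "((\<lambda>x. 1 / x) has_real_derivative - ((1 / x)\<^sup>2)) (at x)"
    using DERIV_inverse[of x UNIV] assms by (simp add: inverse_eq_divide power2_eq_square)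
  have "((\<lambda>x. poly q (1 / x)) has_real_derivative poly (pderiv q) (1 / x) * - ((1 / x)\<^sup>2)) (at x)"
    by (rule DERIV_chain2[OF poly_DERIV inv])
  moreover have "((\<lambda>x. exp (- (1 / x))) has_real_derivative exp (- (1 / x)) * - (- ((1 / x)\<^sup>2))) (at x)"
    by (rule DERIV_chain2[OF DERIV_exp DERIV_minus[OF inv]])
  ultimately show ?thesis
    by (rule DERIV_cong[OF DERIV_mult]) (simp add: poly_mult poly_diff algebra_simps power2_eq_square)
qed

lemma flat_deriv_has_real_derivative: "(flat_deriv k has_real_derivative flat_deriv (Suc k) x) (at x)"
proof -
  consider "x > 0" | "x < 0" | "x = 0" by linarith
  then show ?thesis
  proof cases
    case 1
    then have "((\<lambda>x. poly (flat_poly k) (1 / x) * exp (- (1 / x))) has_real_derivative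
        flat_deriv (Suc k) x) (at x)"
      using has_real_derivative_poly_inverse_times_exp[OF 1, of "flat_poly k"]
      by (simp add: flat_deriv_def)
    then show ?thesis
      by (rule has_field_derivative_transform_within_open[of _ _ _ "{0<..}"])
         (use 1 in \<open>auto simp: flat_deriv_def\<close>)
  next
    case 2
    have "((\<lambda>x. 0) has_real_derivative flat_deriv (Suc k) x) (at x)"
      using 2 by (simp add: flat_deriv_def)
    then show ?thesis
      by (rule has_field_derivative_transform_within_open[of _ _ _ "{..<0}"])
         (use 2 in \<open>auto simp: flat_deriv_def\<close>)
  next
    case 3
    have right: "((\<lambda>y. (flat_deriv k y - flat_deriv k 0) / (y - 0)) \<longlongrightarrow> 0) (at_right 0)"
    proof (rule tendsto_cong[THEN iffD2, OF _ poly_inverse_times_exp_tendsto_0])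
      show "\<forall>\<^sub>F y in at_right 0. (flat_deriv k y - flat_deriv k 0) / (y - 0) =
          poly (pCons 0 (flat_poly k)) (1 / y) * exp (- (1 / y))"
        using eventually_at_right_less[of "0 :: real"]
        by eventually_elim (simp add: flat_deriv_def field_simps)
    qed
    have left: "((\<lambda>y. (flat_deriv k y - flat_deriv k 0) / (y - 0)) \<longlongrightarrow> 0) (at_left 0)"
      by (rule tendsto_eventually) (auto simp: eventually_at_filter flat_deriv_def)
    have "(flat_deriv k has_real_derivative 0) (at 0)"
      using filterlim_split_at[OF left right] has_field_derivative_iff[of "flat_deriv k" 0 0 UNIV]
      by simp
    then show ?thesis using 3 by (simp add: flat_deriv_def)
  qed
qed

definition bump :: "real \<Rightarrow> real \<Rightarrow> real \<Rightarrow> real" where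
  "bump z0 r z = flat_deriv 0 (r\<^sup>2 - (z - z0) * (z - z0))"

lemma smooth_on_bump: "smooth_on UNIV (bump z0 r)"
proof -
  have flat: "smooth_on UNIV (flat_deriv 0)"
    by (rule smooth_on_derivative_tower(1)[of UNIV flat_deriv])
       (simp_all add: flat_deriv_has_real_derivative)
  have "smooth_on UNIV (\<lambda>z. z)"
    by (rule smooth_on_derivative_tower(1)[of UNIV "\<lambda>k z. if k = 0 then z else if k = 1 then 1 else 0"])
       (auto intro!: derivative_eq_intros)
  then have "smooth_on UNIV (\<lambda>z. r\<^sup>2 - (z - z0) * (z - z0))"
    by (intro smooth_on_diff smooth_on_mult smooth_on_const) simp_all
  then show ?thesis
    unfolding bump_def by (rule smooth_on_compose[OF open_UNIV flat])
qed

lemma bump_nonneg: "bump z0 r z \<ge> 0"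
  by (simp add: bump_def flat_deriv_def)

lemma bump_pos: "r > 0 \<Longrightarrow> bump z0 r z0 > 0"
  by (simp add: bump_def flat_deriv_def)

lemma bump_eq_0:
  assumes "r \<ge> 0" "\<bar>z - z0\<bar> \<ge> r"
  shows "bump z0 r z = 0"
proof -
  have "r * r \<le> \<bar>z - z0\<bar> * \<bar>z - z0\<bar>"
    using assms by (intro mult_mono) auto
  then show ?thesis
    by (simp add: bump_def flat_deriv_def power2_eq_square)
qed

lemma test_fun_iff:
  "test_fun a b g \<longleftrightarrow> smooth_on UNIV g \<and> (\<exists>c d. a < c \<and> d < b \<and> (\<forall>z. z \<notin> {c..d} \<longrightarrow> g z = 0))"
  by (simp add: test_fun_def smooth_on_def)

lemma test_fun_smooth_on: "test_fun a b g \<Longrightarrow> smooth_on S g"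
  by (meson smooth_on_subset subset_UNIV test_fun_iff)

lemma test_fun_cmult: "test_fun a b g \<Longrightarrow> test_fun a b (\<lambda>z. c * g z)"
  unfolding test_fun_iff by (auto intro: smooth_on_cmult)

lemma test_fun_bump: "r > 0 \<Longrightarrow> a < z0 - r \<Longrightarrow> z0 + r < b \<Longrightarrow> test_fun a b (bump z0 r)"
  unfolding test_fun_iff using smooth_on_bump by (force intro!: bump_eq_0)

lemma test_fun_higher_deriv:
  assumes "test_fun a b g"
  shows "test_fun a b ((deriv ^^ k) g)"
proof -
  obtain c d where cd: "a < c" "d < b" "\<And>z. z \<notin> {c..d} \<Longrightarrow> g z = 0" and g: "smooth_on UNIV g"
    using assms unfolding test_fun_iff by blast
  have "(deriv ^^ k) g z = 0" if "z \<notin> {c..d}" for z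
  proof -
    have "(deriv ^^ k) g z = (deriv ^^ k) (\<lambda>_. 0) z"
      by (rule higher_deriv_cong_open[of "- {c..d}"]) (use cd that in auto)
    then show ?thesis by (simp add: higher_deriv_zero)
  qed
  then show ?thesis
    unfolding test_fun_iff using cd smooth_on_higher_deriv[OF g] by blast
qed

lemma test_fun_endpoints: "test_fun a b g \<Longrightarrow> g a = 0 \<and> g b = 0"
  unfolding test_fun_iff by force

lemma fundamental_lemma_of_calculus_of_variations:
  fixes h :: "real \<Rightarrow> real"
  assumes ab: "a < b" and h: "continuous_on {a..b} h"
    and orth: "\<And>\<phi>. test_fun a b \<phi> \<Longrightarrow> integral {a..b} (\<lambda>z. h z * \<phi> z) = 0"
    and z0: "z0 \<in> {a<..<b}"
  shows "h z0 = 0"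
proof (rule ccontr)
  assume "h z0 \<noteq> 0"
  define g where "g z = h z0 * h z" for z
  have g: "continuous_on {a..b} g"
    unfolding g_def by (intro continuous_intros h)
  have g0: "g z0 > 0"
    using \<open>h z0 \<noteq> 0\<close> by (metis g_def not_real_square_gt_zero)
  obtain \<delta> where \<delta>: "\<delta> > 0" "\<And>z. z \<in> {a..b} \<Longrightarrow> dist z z0 < \<delta> \<Longrightarrow> dist (g z) (g z0) < g z0"
    using continuous_on_iff[THEN iffD1, OF g, rule_format, of z0 "g z0"] z0 g0 by auto
  define r where "r = min \<delta> (min (z0 - a) (b - z0)) / 2"
  have "min \<delta> (min (z0 - a) (b - z0)) > 0" "min \<delta> (min (z0 - a) (b - z0)) \<le> \<delta>"
    "min \<delta> (min (z0 - a) (b - z0)) \<le> z0 - a" "min \<delta> (min (z0 - a) (b - z0)) \<le> b - z0"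
    using \<delta> z0 by auto
  then have r: "r > 0" "r < \<delta>" "a < z0 - r" "z0 + r < b"
    unfolding r_def by linarith+
  have "integral {a..b} (\<lambda>z. g z * bump z0 r z) = h z0 * integral {a..b} (\<lambda>z. h z * bump z0 r z)"
    by (simp add: g_def mult.assoc)
  also have "\<dots> = 0"
    using orth[OF test_fun_bump[OF r(1,3,4)]] by simp
  finally have int0: "integral {a..b} (\<lambda>z. g z * bump z0 r z) = 0" .
  have cont: "continuous_on (cbox a b) (\<lambda>z. g z * bump z0 r z)"
    using g smooth_on_continuous_on[OF smooth_on_bump] by (auto intro!: continuous_intros)
  have nonneg: "0 \<le> g z * bump z0 r z" if "z \<in> box a b" for z
  proof (cases "\<bar>z - z0\<bar> < r")
    case True
    then have "g z \<ge> 0"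
      using \<delta>(2)[of z] that r by (auto simp: dist_real_def mem_box)
    then show ?thesis by (simp add: bump_nonneg)
  next
    case False
    then show ?thesis using r by (simp add: bump_eq_0)
  qed
  have "((\<lambda>z. g z * bump z0 r z) has_integral 0) (cbox a b)"
    using integrable_integral[OF integrable_continuous[OF cont]] int0 by simp
  from has_integral_0_cbox_imp_0[OF cont nonneg this, of z0] have "g z0 * bump z0 r z0 = 0"
    using z0 by (auto simp: mem_box)
  then show False
    using g0 bump_pos[OF r(1), of z0] by simp
qed

lemma fundamental_lemma_of_calculus_of_variations_vec:
  fixes e e' :: "real \<Rightarrow> real ^ 'n"
  assumes ab: "a < b" and e: "continuous_on {a..b} e" and e': "continuous_on {a..b} e'"
    and eq: "\<And>\<eta>. (\<forall>i. test_fun a b (\<lambda>z. \<eta> z $ i)) \<Longrightarrow>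
               integral {a..b} (\<lambda>z. e z \<bullet> \<eta> z) = integral {a..b} (\<lambda>z. e' z \<bullet> \<eta> z)"
    and z0: "z0 \<in> {a<..<b}"
  shows "e z0 = e' z0"
proof (subst vec_eq_iff, intro allI)
  fix i
  have "e z0 $ i - e' z0 $ i = 0"
  proof (rule fundamental_lemma_of_calculus_of_variations[OF ab _ _ z0])
    show "continuous_on {a..b} (\<lambda>z. e z $ i - e' z $ i)"
      by (intro continuous_intros continuous_on_component e e')
    fix \<phi> assume \<phi>: "test_fun a b \<phi>"
    define \<eta> :: "real \<Rightarrow> real ^ 'n" where "\<eta> z = \<phi> z *\<^sub>R axis i 1" for z
    have "test_fun a b (\<lambda>z. \<eta> z $ k)" for k
    proof -
      have "(\<lambda>z. \<eta> z $ k) = (\<lambda>z. (if k = i then 1 else 0) * \<phi> z)"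
        by (auto simp: \<eta>_def axis_def)
      then show ?thesis by (simp only: test_fun_cmult[OF \<phi>])
    qed
    then have "integral {a..b} (\<lambda>z. e z $ i * \<phi> z) = integral {a..b} (\<lambda>z. e' z $ i * \<phi> z)"
      using eq[of \<eta>] by (simp add: \<eta>_def inner_axis mult.commute)
    moreover have "(\<lambda>z. f z $ i * \<phi> z) integrable_on {a..b}" if "continuous_on {a..b} f" for f
      using that smooth_on_continuous_on[OF test_fun_smooth_on[OF \<phi>]]
      by (intro integrable_continuous_interval continuous_intros continuous_on_component) auto
    ultimately show "integral {a..b} (\<lambda>z. (e z $ i - e' z $ i) * \<phi> z) = 0"
      using e e' by (simp add: left_diff_distrib integral_diff)
  qed
  then show "e z0 $ i = e' z0 $ i" by simp
qed

lemma integral_mult_higher_deriv_test_fun: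
  assumes Z: "open Z" "{a..b} \<subseteq> Z" and ab: "a \<le> b" and f: "smooth_on Z f" and g: "test_fun a b g"
  shows "integral {a..b} (\<lambda>z. f z * (deriv ^^ j) g z) =
           (-1) ^ j * integral {a..b} (\<lambda>z. (deriv ^^ j) f z * g z)"
  using f
proof (induction j arbitrary: f)
  case (Suc j)
  define G where "G = (deriv ^^ j) g"
  have G: "test_fun a b G"
    unfolding G_def by (rule test_fun_higher_deriv[OF g])
  have G_smooth: "smooth_on UNIV G"
    by (rule test_fun_smooth_on[OF G])
  define I where "I = integral {a..b} (\<lambda>z. f z * deriv G z)"
  have "((\<lambda>z. deriv f z * G z) has_integral - I) {a..b}"
  proof (rule integration_by_parts[OF bounded_bilinear_mult ab])
    show "continuous_on {a..b} f" "continuous_on {a..b} G"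
      using Suc.prems Z(2) G_smooth by (auto intro: smooth_on_continuous_on)
    show "(f has_vector_derivative deriv f z) (at z)" if "z \<in> {a..b}" for z
      using smooth_on_has_real_derivative[OF Suc.prems] that Z(2)
      by (auto simp: has_real_derivative_iff_has_vector_derivative)
    show "(G has_vector_derivative deriv G z) (at z)" for z
      using smooth_on_has_real_derivative[OF G_smooth]
      by (auto simp: has_real_derivative_iff_has_vector_derivative)
    have "continuous_on {a..b} (deriv G)"
      by (rule smooth_on_continuous_on[OF smooth_on_deriv[OF G_smooth]]) simp
    then have "continuous_on {a..b} (\<lambda>z. f z * deriv G z)"
      using smooth_on_continuous_on[OF Suc.prems Z(2)] by (intro continuous_intros)
    then show "((\<lambda>z. f z * deriv G z) has_integral f b * G b - f a * G a - - I) {a..b}"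
      using test_fun_endpoints[OF G] integrable_continuous_interval unfolding I_def
      by (auto intro!: integrable_integral)
  qed
  then have "integral {a..b} (\<lambda>z. f z * deriv G z) = - integral {a..b} (\<lambda>z. deriv f z * G z)"
    unfolding I_def by (simp add: integral_unique)
  also have "\<dots> = - ((-1) ^ j * integral {a..b} (\<lambda>z. (deriv ^^ j) (deriv f) z * g z))"
    unfolding G_def using Suc.IH[OF smooth_on_deriv[OF Suc.prems]] by simp
  finally show ?case
    unfolding G_def by (simp only: higher_deriv_Suc funpow_swap1) simp
qed simp

section \<open>The variational derivative of the reduced Hamiltonian\<close>

lemma xbar_component: "xbar I X z $ p = (deriv ^^ snd (I p)) (\<lambda>w. X w $ fst (I p)) z"
  by (simp add: xbar_def Dz_def)

lemma smooth_on_xbar: "(\<And>i. smooth_on S (\<lambda>w. X w $ i)) \<Longrightarrow> smooth_on S (\<lambda>w. xbar I X w $ p)"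
  by (simp add: xbar_component smooth_on_higher_deriv)

lemma continuous_on_vec_components:
  fixes Y :: "real \<Rightarrow> real ^ 'l"
  shows "(\<And>p. continuous_on S (\<lambda>z. Y z $ p)) \<Longrightarrow> continuous_on S Y"
  using continuous_on_vec_lambda[of S "\<lambda>p z. Y z $ p"] by simp

lemma continuous_on_xbar:
  "(\<And>i. smooth_on Z (\<lambda>w. X w $ i)) \<Longrightarrow> S \<subseteq> Z \<Longrightarrow> continuous_on S (xbar I X)"
  by (intro continuous_on_vec_components smooth_on_continuous_on smooth_on_xbar)

lemma xbar_add_scaleR:
  assumes S: "open S" "z \<in> S"
    and X: "\<And>i. smooth_on S (\<lambda>w. X w $ i)" and \<eta>: "\<And>i. smooth_on S (\<lambda>w. \<eta> w $ i)"
  shows "xbar I (\<lambda>w. X w + \<epsilon> *\<^sub>R \<eta> w) z = xbar I X z + \<epsilon> *\<^sub>R xbar I \<eta> z"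
  using higher_deriv_add[OF S(1) X smooth_on_cmult[OF S(1) \<eta>] S(2)] higher_deriv_cmult[OF S(1) \<eta> S(2)]
  by (simp add: vec_eq_iff xbar_component)

definition xbar_adj :: "('l \<Rightarrow> 'n \<times> nat) \<Rightarrow> (real \<Rightarrow> real ^ 'l) \<Rightarrow> real \<Rightarrow> real ^ 'n" where
  "xbar_adj I g w = (\<chi> i. \<Sum>q | fst (I q) = i. (-1) ^ snd (I q) * Dz (snd (I q)) (\<lambda>u. g u $ q) w)"

lemma sum_mult_sum_fiber:
  fixes f :: "'q :: finite \<Rightarrow> 'k :: finite" and c :: "'k \<Rightarrow> 'a :: comm_semiring_0"
  shows "(\<Sum>k\<in>UNIV. c k * (\<Sum>q | f q = k. X q)) = (\<Sum>q\<in>UNIV. c (f q) * X q)"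
proof -
  have "(\<Sum>k\<in>UNIV. c k * (\<Sum>q | f q = k. X q)) = (\<Sum>k\<in>UNIV. \<Sum>q\<in>{q \<in> UNIV. f q = k}. c (f q) * X q)"
    unfolding sum_distrib_left by (intro sum.cong refl) auto
  also have "\<dots> = (\<Sum>q\<in>UNIV. c (f q) * X q)"
    by (rule sum.group) auto
  finally show ?thesis .
qed

lemma inner_xbar_adj:
  "\<eta> \<bullet> xbar_adj I g w =
     (\<Sum>q\<in>UNIV. \<eta> $ fst (I q) * ((-1) ^ snd (I q) * Dz (snd (I q)) (\<lambda>u. g u $ q) w))"
  by (simp add: inner_vec_def xbar_adj_def sum_mult_sum_fiber)

lemma smooth_on_xbar_adj:
  "open S \<Longrightarrow> (\<And>q. smooth_on S (\<lambda>u. g u $ q)) \<Longrightarrow> smooth_on S (\<lambda>w. xbar_adj I g w $ i)"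
  unfolding xbar_adj_def Dz_def
  by (simp add: smooth_on_sum smooth_on_cmult smooth_on_higher_deriv)

lemma integral_xbar_inner:
  fixes \<eta> :: "real \<Rightarrow> real ^ 'n" and g :: "real \<Rightarrow> real ^ 'l" and I :: "'l \<Rightarrow> 'n \<times> nat"
  assumes Z: "open Z" "{a..b} \<subseteq> Z" and ab: "a \<le> b"
    and g: "\<And>q. smooth_on Z (\<lambda>u. g u $ q)" and \<eta>: "\<And>i. test_fun a b (\<lambda>z. \<eta> z $ i)"
  shows "integral {a..b} (\<lambda>z. xbar I \<eta> z \<bullet> g z) = integral {a..b} (\<lambda>z. \<eta> z \<bullet> xbar_adj I g z)"
proof -
  let ?\<eta> = "\<lambda>q z. \<eta> z $ fst (I q)" and ?g = "\<lambda>q. (\<lambda>u. g u $ q)" and ?j = "\<lambda>q. snd (I q)"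
  have \<eta>_smooth: "smooth_on UNIV (?\<eta> q)" for q
    using test_fun_smooth_on[OF \<eta>] .
  have cont: "continuous_on {a..b} ((deriv ^^ k) (?g q))" "continuous_on {a..b} ((deriv ^^ k) (?\<eta> q))"
    for k q
    using smooth_on_continuous_on[OF smooth_on_higher_deriv[OF g] Z(2)]
      smooth_on_continuous_on[OF smooth_on_higher_deriv[OF \<eta>_smooth]] by auto
  have int: "(\<lambda>z. (deriv ^^ k) (?g q) z * (deriv ^^ k') (?\<eta> q) z) integrable_on {a..b}" for k k' q
    using cont by (intro integrable_continuous_interval continuous_on_mult)
  have "integral {a..b} (\<lambda>z. xbar I \<eta> z \<bullet> g z) =
      (\<Sum>q\<in>UNIV. integral {a..b} (\<lambda>z. g z $ q * (deriv ^^ ?j q) (?\<eta> q) z))"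
    using int[where k = 0] by (simp add: inner_vec_def xbar_component integral_sum mult.commute)
  also have "\<dots> = (\<Sum>q\<in>UNIV. (-1) ^ ?j q * integral {a..b} (\<lambda>z. (deriv ^^ ?j q) (?g q) z * ?\<eta> q z))"
    by (intro sum.cong refl integral_mult_higher_deriv_test_fun[OF Z ab g \<eta>])
  also have "\<dots> = integral {a..b} (\<lambda>z. \<Sum>q\<in>UNIV. (-1) ^ ?j q * ((deriv ^^ ?j q) (?g q) z * ?\<eta> q z))"
    using int[where k' = 0] by (simp add: integral_sum integrable_on_mult_right)
  also have "\<dots> = integral {a..b} (\<lambda>z. \<eta> z \<bullet> xbar_adj I g z)"
    by (simp add: inner_xbar_adj Dz_def mult_ac)
  finally show ?thesis .
qed

lemma has_real_derivative_integral_along_line: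
  fixes F :: "real ^ 'l \<Rightarrow> real" and Y B :: "real \<Rightarrow> real ^ 'l"
  assumes F: "\<And>y. (F has_derivative (\<lambda>h. \<Sum>p\<in>UNIV. h $ p * F' p y)) (at y)"
    and F': "\<And>p. continuous_on UNIV (F' p)"
    and Y: "continuous_on {a..b} Y" and B: "continuous_on {a..b} B"
  shows "((\<lambda>\<epsilon>. integral {a..b} (\<lambda>z. F (Y z + \<epsilon> *\<^sub>R B z))) has_real_derivative
           integral {a..b} (\<lambda>z. \<Sum>p\<in>UNIV. B z $ p * F' p (Y z))) (at 0)"
proof -
  define f' where "f' \<epsilon> z = (\<Sum>p\<in>UNIV. B z $ p * F' p (Y z + \<epsilon> *\<^sub>R B z))" for \<epsilon> z
  have "((\<lambda>\<epsilon>. integral (cbox a b) (\<lambda>z. F (Y z + \<epsilon> *\<^sub>R B z))) has_real_derivative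
      integral (cbox a b) (f' 0)) (at 0 within UNIV)"
  proof (rule leibniz_rule_field_derivative)
    show "((\<lambda>\<epsilon>. F (Y z + \<epsilon> *\<^sub>R B z)) has_real_derivative f' \<epsilon> z) (at \<epsilon> within UNIV)" for \<epsilon> z
      unfolding f'_def
      by (rule has_real_derivative_compose_curve[OF F]) (auto intro!: derivative_eq_intros)
    have "continuous_on UNIV F"
      by (intro continuous_at_imp_continuous_on ballI has_derivative_continuous[OF F])
    then have "continuous_on {a..b} (\<lambda>z. F (Y z + \<epsilon> *\<^sub>R B z))" for \<epsilon>
      by (rule continuous_on_compose2) (use Y B in \<open>auto intro!: continuous_intros\<close>)
    then show "(\<lambda>z. F (Y z + \<epsilon> *\<^sub>R B z)) integrable_on cbox a b" for \<epsilon>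
      by (simp add: interval_cbox[symmetric] integrable_continuous_interval)
    have snd: "continuous_on (UNIV \<times> {a..b}) (snd :: real \<times> real \<Rightarrow> real)"
      using continuous_on_snd[OF continuous_on_id] by simp
    have line: "continuous_on (UNIV \<times> {a..b}) (\<lambda>x :: real \<times> real. Y (snd x) + fst x *\<^sub>R B (snd x))"
      by (intro continuous_intros continuous_on_compose2[OF Y snd] continuous_on_compose2[OF B snd]) auto
    have "continuous_on (UNIV \<times> {a..b}) (\<lambda>x. B (snd x) $ p * F' p (Y (snd x) + fst x *\<^sub>R B (snd x)))"
      for p
      by (intro continuous_on_mult continuous_on_component continuous_on_compose2[OF B snd]
          continuous_on_compose2[OF F' line]) auto
    then show "continuous_on (UNIV \<times> cbox a b) (\<lambda>(\<epsilon>, z). f' \<epsilon> z)"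
      unfolding f'_def by (simp add: case_prod_beta' continuous_on_sum interval_cbox[symmetric])
  qed auto
  then show ?thesis by (simp add: f'_def[abs_def] interval_cbox[symmetric])
qed

lemma is_var_deriv_Hfun:
  fixes X e :: "real \<Rightarrow> real ^ 'n" and H :: "real ^ 'l \<Rightarrow> real" and I :: "'l \<Rightarrow> 'n \<times> nat"
  assumes ab: "a < b" and Z: "open Z" "{a..b} \<subseteq> Z" and H: "Cinf_Rl H"
    and X: "\<And>i. smooth_on Z (\<lambda>w. X w $ i)"
    and e: "is_var_deriv a b (Hfun a b I H) X e" "continuous_on {a..b} e"
    and w: "w \<in> {a<..<b}"
  shows "e w = xbar_adj I (\<lambda>u. \<chi> p. pdH H p (xbar I X u)) w"
proof -
  define g where "g u = (\<chi> p. pdH H p (xbar I X u))" for u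
  have g: "smooth_on Z (\<lambda>u. g u $ p)" for p
    unfolding g_def using smooth_on_Cinf_Rl_compose[OF Cinf_Rl_pdH[OF H] Z(1) smooth_on_xbar[OF X]]
    by simp
  show ?thesis
    unfolding g_def[symmetric]
  proof (rule fundamental_lemma_of_calculus_of_variations_vec[OF ab e(2) _ _ w])
    show "continuous_on {a..b} (xbar_adj I g)"
      by (intro continuous_on_vec_components smooth_on_continuous_on[OF smooth_on_xbar_adj[OF Z(1) g]] Z)
    fix \<eta> :: "real \<Rightarrow> real ^ 'n" assume \<eta>: "\<forall>i. test_fun a b (\<lambda>z. \<eta> z $ i)"
    have \<eta>_smooth: "smooth_on Z (\<lambda>z. \<eta> z $ i)" for i
      using \<eta> test_fun_smooth_on by blast
    have first_variation: "((\<lambda>\<epsilon>. Hfun a b I H (\<lambda>z. X z + \<epsilon> *\<^sub>R \<eta> z)) has_real_derivative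
        integral {a..b} (\<lambda>z. e z \<bullet> \<eta> z)) (at 0)"
      using e(1) \<eta> unfolding is_var_deriv_def by blast
    have Hfun_line: "Hfun a b I H (\<lambda>z. X z + \<epsilon> *\<^sub>R \<eta> z) =
        integral {a..b} (\<lambda>z. H (xbar I X z + \<epsilon> *\<^sub>R xbar I \<eta> z))" for \<epsilon>
      unfolding Hfun_def using Z
      by (intro integral_cong) (auto simp: xbar_add_scaleR[OF Z(1) _ X \<eta>_smooth])
    have "((\<lambda>\<epsilon>. integral {a..b} (\<lambda>z. H (xbar I X z + \<epsilon> *\<^sub>R xbar I \<eta> z))) has_real_derivative
        integral {a..b} (\<lambda>z. xbar I \<eta> z \<bullet> g z)) (at 0)"
      using has_real_derivative_integral_along_line[OF Cinf_Rl_has_derivative[OF H]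
          Cinf_Rl_continuous_on[OF Cinf_Rl_pdH[OF H]] continuous_on_xbar[OF X Z(2)]
          continuous_on_xbar[OF \<eta>_smooth Z(2)]]
      by (simp add: g_def inner_vec_def)
    with first_variation[unfolded Hfun_line]
    have "integral {a..b} (\<lambda>z. e z \<bullet> \<eta> z) = integral {a..b} (\<lambda>z. xbar I \<eta> z \<bullet> g z)"
      by (rule DERIV_unique)
    also have "\<dots> = integral {a..b} (\<lambda>z. \<eta> z \<bullet> xbar_adj I g z)"
      using ab \<eta> by (intro integral_xbar_inner[OF Z _ g]) auto
    finally show "integral {a..b} (\<lambda>z. e z \<bullet> \<eta> z) = integral {a..b} (\<lambda>z. xbar_adj I g z \<bullet> \<eta> z)"
      by (simp add: inner_commute)
  qed
qed

section \<open>The reduced operators\<close>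

lemma JJop_component:
  assumes S: "open S" and v: "\<And>q. smooth_on S (\<lambda>z. v z $ q)" and z: "z \<in> S"
  shows "JJop m P I v z $ p = (\<Sum>q\<in>UNIV. \<Sum>j\<le>m. P j $ fst (I p) $ fst (I q) *
           ((-1) ^ snd (I q) * (deriv ^^ (snd (I p) + j)) ((deriv ^^ snd (I q)) (\<lambda>u. v u $ q)) z))"
proof -
  define V where "V q = (deriv ^^ snd (I q)) (\<lambda>u. v u $ q)" for q
  have V: "smooth_on S ((deriv ^^ k) (V q))" for k q
    unfolding V_def by (intro smooth_on_higher_deriv v)
  have "JJop m P I v z $ p = (deriv ^^ snd (I p)) (\<lambda>w. \<Sum>q\<in>UNIV. \<Sum>j\<le>m.
      P j $ fst (I p) $ fst (I q) * ((-1) ^ snd (I q) * (deriv ^^ j) (V q) w)) z"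
    unfolding JJop_def Dz_def vec_lambda_beta V_def[symmetric]
    by (rule higher_deriv_cong_open[OF S _ z]) (simp add: higher_deriv_cmult[OF S] V[of 0, simplified])
  also have "\<dots> = (\<Sum>q\<in>UNIV. \<Sum>j\<le>m. P j $ fst (I p) $ fst (I q) *
      ((-1) ^ snd (I q) * (deriv ^^ snd (I p)) ((deriv ^^ j) (V q)) z))"
    using V by (simp add: higher_deriv_sum[OF _ S _ z] higher_deriv_cmult[OF S _ z] smooth_on_sum[OF _ S]
        smooth_on_cmult[OF S])
  finally show ?thesis by (simp add: V_def funpow_add)
qed

lemma integral_inner_JJop:
  fixes u v :: "real \<Rightarrow> real ^ 'l" and P :: "nat \<Rightarrow> real ^ 'n ^ 'n" and I :: "'l \<Rightarrow> 'n \<times> nat"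
  assumes ab: "a \<le> b" and u: "\<And>p. test_fun a b (\<lambda>z. u z $ p)" and v: "\<And>q. test_fun a b (\<lambda>z. v z $ q)"
  shows "integral {a..b} (\<lambda>z. u z \<bullet> JJop m P I v z) =
           (\<Sum>p\<in>UNIV. \<Sum>q\<in>UNIV. \<Sum>j\<le>m. P j $ fst (I p) $ fst (I q) * (-1) ^ (snd (I p) + j) *
              integral {a..b} (\<lambda>z. (deriv ^^ (snd (I p) + j + snd (I q))) (\<lambda>z. u z $ p) z * v z $ q))"
proof -
  let ?u = "\<lambda>p z. u z $ p" and ?v = "\<lambda>q z. v z $ q" and ?N = "\<lambda>p q j. snd (I p) + j + snd (I q)"
  define L where "L p q j = (\<lambda>z. P j $ fst (I p) $ fst (I q) * (-1) ^ snd (I q) *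
      (?u p z * (deriv ^^ ?N p q j) (?v q) z))" for p q j
  have u_smooth: "smooth_on UNIV (?u p)" and v_smooth: "smooth_on UNIV (?v q)" for p q
    using u v by (auto intro: test_fun_smooth_on)
  have "smooth_on UNIV (L p q j)" for p q j
    unfolding L_def
    by (intro smooth_on_mult smooth_on_const smooth_on_higher_deriv u_smooth v_smooth open_UNIV)
  then have int: "L p q j integrable_on {a..b}" for p q j
    by (auto intro!: integrable_continuous_interval smooth_on_continuous_on)
  have "integral {a..b} (\<lambda>z. u z \<bullet> JJop m P I v z) =
      integral {a..b} (\<lambda>z. \<Sum>p\<in>UNIV. \<Sum>q\<in>UNIV. \<Sum>j\<le>m. L p q j z)"
    by (simp add: inner_vec_def L_def sum_distrib_left mult_ac higher_deriv_higher_deriv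
        JJop_component[OF open_UNIV v_smooth UNIV_I])
  also have "\<dots> = (\<Sum>p\<in>UNIV. \<Sum>q\<in>UNIV. \<Sum>j\<le>m. integral {a..b} (L p q j))"
    by (simp add: integral_sum integrable_sum int)
  also have "\<dots> = (\<Sum>p\<in>UNIV. \<Sum>q\<in>UNIV. \<Sum>j\<le>m. P j $ fst (I p) $ fst (I q) * (-1) ^ (snd (I p) + j) *
      integral {a..b} (\<lambda>z. (deriv ^^ ?N p q j) (?u p) z * ?v q z))"
    by (intro sum.cong refl)
       (simp add: L_def integral_mult_higher_deriv_test_fun[OF open_UNIV _ ab u_smooth v] power_add)
  finally show ?thesis .
qed

text \<open>Both sides reduce to the integrals of \<open>\<partial>\<^sup>j\<^sup>p\<^sup>+\<^sup>j\<^sup>+\<^sup>j\<^sup>q u\<^sub>p * v\<^sub>q\<close>, with signs that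
  differ exactly by the factor \<open>(-1)\<^sup>j\<^sup>+\<^sup>1\<close> of \<open>P\<^sub>j\<^sup>T = (-1)\<^sup>j\<^sup>+\<^sup>1 P\<^sub>j\<close>.\<close>

lemma JJop_skew_adjoint:
  fixes u v :: "real \<Rightarrow> real ^ 'l" and P :: "nat \<Rightarrow> real ^ 'n ^ 'n" and I :: "'l \<Rightarrow> 'n \<times> nat"
  assumes P: "\<forall>j\<le>m. P j = (-1) ^ (j + 1) *\<^sub>R transpose (P j)" and ab: "a \<le> b"
    and u: "\<forall>p. test_fun a b (\<lambda>z. u z $ p)" and v: "\<forall>q. test_fun a b (\<lambda>z. v z $ q)"
  shows "integral {a..b} (\<lambda>z. u z \<bullet> JJop m P I v z) = - integral {a..b} (\<lambda>z. JJop m P I u z \<bullet> v z)"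
proof -
  let ?u = "\<lambda>p z. u z $ p" and ?v = "\<lambda>q z. v z $ q" and ?N = "\<lambda>p q j. snd (I p) + j + snd (I q)"
    and ?c = "\<lambda>p q j. P j $ fst (I p) $ fst (I q)"
  have swap: "integral {a..b} (\<lambda>z. (deriv ^^ ?N q p j) (?v q) z * ?u p z) =
      (-1) ^ ?N p q j * integral {a..b} (\<lambda>z. (deriv ^^ ?N p q j) (?u p) z * ?v q z)" for p q j
    using integral_mult_higher_deriv_test_fun[OF open_UNIV _ ab test_fun_smooth_on[OF u[rule_format, of p]]
        v[rule_format, of q], where j = "?N p q j"]
    by (simp add: mult.commute add_ac)
  have sign: "?c q p j * (-1) ^ (snd (I q) + j) * ((-1) ^ ?N p q j * K) =
      - (?c p q j * (-1) ^ (snd (I p) + j) * K)"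
    if "j \<le> m" for p q j K
  proof -
    have "?c q p j = ((-1) ^ (j + 1) *\<^sub>R transpose (P j)) $ fst (I q) $ fst (I p)"
      using P that by metis
    then show ?thesis by (simp add: transpose_def power_add)
  qed
  have "integral {a..b} (\<lambda>z. JJop m P I u z \<bullet> v z) = integral {a..b} (\<lambda>z. v z \<bullet> JJop m P I u z)"
    by (simp add: inner_commute)
  also have "\<dots> = (\<Sum>q\<in>UNIV. \<Sum>p\<in>UNIV. \<Sum>j\<le>m. ?c q p j * (-1) ^ (snd (I q) + j) *
      integral {a..b} (\<lambda>z. (deriv ^^ ?N q p j) (?v q) z * ?u p z))"
    using integral_inner_JJop[OF ab v[rule_format] u[rule_format]] .
  also have "\<dots> = - (\<Sum>p\<in>UNIV. \<Sum>q\<in>UNIV. \<Sum>j\<le>m. ?c p q j * (-1) ^ (snd (I p) + j) *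
      integral {a..b} (\<lambda>z. (deriv ^^ ?N p q j) (?u p) z * ?v q z))"
    unfolding sum_negf[symmetric] by (subst sum.swap) (intro sum.cong refl, simp add: swap sign)
  finally show ?thesis
    using integral_inner_JJop[OF ab u[rule_format] v[rule_format]] by simp
qed

lemma Jop_component_xbar_adj:
  assumes S: "open S" and e: "\<And>w. w \<in> S \<Longrightarrow> e w = xbar_adj I g w"
    and g: "\<And>q. smooth_on S (\<lambda>u. g u $ q)" and w: "w \<in> S"
  shows "Jop m P e w $ i = (\<Sum>q\<in>UNIV. \<Sum>j\<le>m. P j $ i $ fst (I q) *
           Dz j (\<lambda>w'. (-1) ^ snd (I q) * Dz (snd (I q)) (\<lambda>u. g u $ q) w') w)"
proof -
  define X where "X j q = (-1) ^ snd (I q) * (deriv ^^ j) ((deriv ^^ snd (I q)) (\<lambda>u. g u $ q)) w" for j q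
  have g': "smooth_on S ((deriv ^^ k) (\<lambda>u. g u $ q))" for k q
    by (rule smooth_on_higher_deriv[OF g])
  have "(deriv ^^ j) (\<lambda>w. e w $ k) w =
      (deriv ^^ j) (\<lambda>w. \<Sum>q | fst (I q) = k. (-1) ^ snd (I q) * (deriv ^^ snd (I q)) (\<lambda>u. g u $ q) w) w"
    for j k
    by (rule higher_deriv_cong_open[OF S _ w]) (simp add: e xbar_adj_def Dz_def)
  also have "\<dots> j k = (\<Sum>q | fst (I q) = k. X j q)" for j k
    using g' by (simp add: X_def higher_deriv_sum[OF _ S _ w] higher_deriv_cmult[OF S _ w]
        smooth_on_cmult[OF S])
  finally have "Jop m P e w $ i = (\<Sum>j\<le>m. \<Sum>k\<in>UNIV. P j $ i $ k * (\<Sum>q | fst (I q) = k. X j q))"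
    by (simp add: Jop_def Dz_def matrix_vector_mult_def)
  also have "\<dots> = (\<Sum>q\<in>UNIV. \<Sum>j\<le>m. P j $ i $ fst (I q) * X j q)"
    by (simp add: sum_mult_sum_fiber sum.swap[of _ "{..m}"])
  finally show ?thesis
    using g' by (simp add: X_def Dz_def higher_deriv_cmult[OF S _ w])
qed

lemma Gadj_xbar_adj:
  assumes S: "open S" and e: "\<And>w. w \<in> S \<Longrightarrow> e w = xbar_adj I g w" and w: "w \<in> S"
  shows "Gadj mg G e w = GGadj mg G I g w"
proof -
  have "(transpose (G k) *v e w') $ r = (\<Sum>p\<in>UNIV. G k $ fst (I p) $ r *
      ((-1) ^ snd (I p) * Dz (snd (I p)) (\<lambda>u. g u $ p) w'))" if "w' \<in> S" for k r w'
    by (simp add: e[OF that] matrix_vector_mult_def transpose_def xbar_adj_def sum_mult_sum_fiber)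
  then have "(deriv ^^ k) (\<lambda>w. (transpose (G k) *v e w) $ r) w = (deriv ^^ k) (\<lambda>w. \<Sum>p\<in>UNIV.
      G k $ fst (I p) $ r * ((-1) ^ snd (I p) * Dz (snd (I p)) (\<lambda>u. g u $ p) w)) w" for k r
    by (rule higher_deriv_cong_open[OF S _ w])
  then show ?thesis
    by (simp add: vec_eq_iff Gadj_def GGadj_def Dz_def)
qed

lemma smooth_on_GGadj:
  assumes S: "open S" and g: "\<And>q. smooth_on S (\<lambda>u. g u $ q)"
  shows "smooth_on S (\<lambda>w. GGadj mg G I g w $ r)"
  unfolding GGadj_def Dz_def vec_lambda_beta
  by (intro smooth_on_sum smooth_on_mult smooth_on_const smooth_on_higher_deriv g S finite_atMost finite)

lemma higher_deriv_rhs_xbar_adj: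
  assumes S: "open S" and e: "\<And>w. w \<in> S \<Longrightarrow> e w = xbar_adj I g w"
    and g: "\<And>q. smooth_on S (\<lambda>u. g u $ q)" and R: "\<And>r s. smooth_on S (\<lambda>z. R z $ r $ s)"
    and z: "z \<in> S"
  shows "(deriv ^^ snd (I p)) (\<lambda>w. (Jop m P e w - Gop mg G (Rmul R (Gadj mg G e)) w) $ fst (I p)) z =
           (JJop m P I g z - GGop mg G I (Rmul R (GGadj mg G I g)) z) $ p"
proof -
  define A where "A = (\<lambda>w. \<Sum>q\<in>UNIV. \<Sum>j\<le>m. P j $ fst (I p) $ fst (I q) *
      Dz j (\<lambda>w'. (-1) ^ snd (I q) * Dz (snd (I q)) (\<lambda>u. g u $ q) w') w)"
  define B where "B = (\<lambda>w. \<Sum>k\<le>mg. \<Sum>r\<in>UNIV. G k $ fst (I p) $ r *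
      Dz k (\<lambda>w'. Rmul R (GGadj mg G I g) w' $ r) w)"
  have RG: "smooth_on S (\<lambda>w. Rmul R (GGadj mg G I g) w $ r)" for r
    unfolding Rmul_def matrix_vector_mult_def vec_lambda_beta
    by (intro smooth_on_sum smooth_on_mult R smooth_on_GGadj[OF S g] S finite)
  have A: "smooth_on S A" and B: "smooth_on S B"
    unfolding A_def B_def Dz_def
    by (intro smooth_on_sum smooth_on_mult smooth_on_const smooth_on_higher_deriv g RG S finite
        finite_atMost)+
  have "Gop mg G (Rmul R (Gadj mg G e)) w $ fst (I p) = B w" if "w \<in> S" for w
  proof -
    have "Rmul R (Gadj mg G e) w' = Rmul R (GGadj mg G I g) w'" if "w' \<in> S" for w'
      by (simp add: Rmul_def Gadj_xbar_adj[OF S e that])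
    then have "(deriv ^^ k) (\<lambda>w. Rmul R (Gadj mg G e) w $ r) w =
        (deriv ^^ k) (\<lambda>w. Rmul R (GGadj mg G I g) w $ r) w" for k r
      by (intro higher_deriv_cong_open[OF S _ that]) simp
    then show ?thesis
      by (simp add: B_def Gop_def Dz_def matrix_vector_mult_def)
  qed
  then have "(Jop m P e w - Gop mg G (Rmul R (Gadj mg G e)) w) $ fst (I p) = A w - B w" if "w \<in> S" for w
    using Jop_component_xbar_adj[OF S e g that] that by (simp add: A_def)
  then have "(deriv ^^ snd (I p)) (\<lambda>w. (Jop m P e w - Gop mg G (Rmul R (Gadj mg G e)) w) $ fst (I p)) z =
      (deriv ^^ snd (I p)) (\<lambda>w. A w - B w) z"
    by (rule higher_deriv_cong_open[OF S _ z])
  also have "\<dots> = (deriv ^^ snd (I p)) A z - (deriv ^^ snd (I p)) B z"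
    by (rule higher_deriv_diff[OF S A B z])
  finally show ?thesis
    by (simp add: A_def B_def JJop_def GGop_def Dz_def)
qed

section \<open>The reduced system\<close>

lemma Cinf_on_smooth_on_interior:
  assumes "Cinf_on {a..b} f"
  shows "smooth_on {a<..<b} f"
proof -
  obtain D where "D 0 = f"
    and D: "\<And>k z. z \<in> {a..b} \<Longrightarrow> (D k has_real_derivative D (Suc k) z) (at z within {a..b})"
    using assms unfolding Cinf_on_def by blast
  moreover have "(D k has_real_derivative D (Suc k) z) (at z)" if "z \<in> {a<..<b}" for k z
    using D[of z k] that at_within_interior[of z "{a..b}"] by auto
  ultimately show ?thesis
    by (intro smooth_on_derivative_tower(1)[of _ D]) auto
qed

lemma Cinf2_on_partials:
  assumes "Cinf2_on U f"
  obtains D where "D 0 0 = f"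
    and "\<And>p q s w. (s, w) \<in> U \<Longrightarrow> ((\<lambda>w. D p q s w) has_real_derivative D p (Suc q) s w) (at w)"
    and "\<And>p q s w. (s, w) \<in> U \<Longrightarrow> ((\<lambda>s. D p q s w) has_real_derivative D (Suc p) q s w) (at s)"
proof -
  obtain D where D0: "D 0 0 = f" and D: "\<And>p q y. y \<in> U \<Longrightarrow> ((\<lambda>w. D p q (fst w) (snd w)) has_derivative
      (\<lambda>h. fst h * D (Suc p) q (fst y) (snd y) + snd h * D p (Suc q) (fst y) (snd y))) (at y)"
    using assms unfolding Cinf2_on_def by blast
  show ?thesis
  proof (rule that[of D, OF D0])
    fix p q s w assume "(s, w) \<in> U"
    from D[OF this] have D': "((\<lambda>y. D p q (fst y) (snd y)) has_derivative
        (\<lambda>h. fst h * D (Suc p) q s w + snd h * D p (Suc q) s w)) (at (s, w))"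
      by simp
    have "((\<lambda>w. (s, w)) has_derivative (\<lambda>h. (0, h))) (at w)"
      "((\<lambda>s. (s, w)) has_derivative (\<lambda>h. (h, 0))) (at s)"
      by (auto intro!: derivative_eq_intros)
    from diff_chain_at[OF this(1) D'] diff_chain_at[OF this(2) D']
    show "((\<lambda>w. D p q s w) has_real_derivative D p (Suc q) s w) (at w)"
      "((\<lambda>s. D p q s w) has_real_derivative D (Suc p) q s w) (at s)"
      by (simp_all add: o_def has_real_derivative_iff_has_vector_derivative has_vector_derivative_def)
  qed
qed

lemma Cinf2_on_smooth_on_slice:
  assumes "Cinf2_on (T \<times> Z) f" "open Z" "s \<in> T"
  shows "smooth_on Z (f s)"
proof -
  obtain D where "D 0 0 = f"
    and "\<And>p q s w. (s, w) \<in> T \<times> Z \<Longrightarrow> ((\<lambda>w. D p q s w) has_real_derivative D p (Suc q) s w) (at w)"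
    and "\<And>p q s w. (s, w) \<in> T \<times> Z \<Longrightarrow> ((\<lambda>s. D p q s w) has_real_derivative D (Suc p) q s w) (at s)"
    using Cinf2_on_partials[OF assms(1)] by blast
  then show ?thesis
    using assms(3) by (intro smooth_on_derivative_tower(1)[OF assms(2), of "\<lambda>k. D 0 k s"]) auto
qed

lemma has_real_derivative_higher_deriv_slice:
  assumes f: "Cinf2_on (T \<times> Z) f" and T: "open T" "t \<in> T" and Z: "open Z"
    and S: "open S" "S \<subseteq> Z" "z \<in> S"
    and f': "\<And>w. w \<in> S \<Longrightarrow> ((\<lambda>s. f s w) has_real_derivative f' w) (at t)"
  shows "((\<lambda>s. (deriv ^^ k) (f s) z) has_real_derivative (deriv ^^ k) f' z) (at t)"
proof -
  obtain D where D0: "D 0 0 = f"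
    and Dz: "\<And>p q s w. (s, w) \<in> T \<times> Z \<Longrightarrow> ((\<lambda>w. D p q s w) has_real_derivative D p (Suc q) s w) (at w)"
    and Dt: "\<And>p q s w. (s, w) \<in> T \<times> Z \<Longrightarrow> ((\<lambda>s. D p q s w) has_real_derivative D (Suc p) q s w) (at s)"
    using Cinf2_on_partials[OF f] by blast
  have tower: "(deriv ^^ k) (D p 0 s) w = D p k s w" if "s \<in> T" "w \<in> Z" for p s w
    using that by (intro smooth_on_derivative_tower(2)[OF Z, of "\<lambda>k. D p k s"] Dz) auto
  have "f' w = D 1 0 t w" if "w \<in> S" for w
  proof -
    have "((\<lambda>s. f s w) has_real_derivative D 1 0 t w) (at t)"
      using Dt[of t w 0 0] T S that D0 by auto
    then show ?thesis
      using DERIV_unique f'[OF that] by blast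
  qed
  then have "(deriv ^^ k) f' z = D 1 k t z"
    using higher_deriv_cong_open[OF S(1) _ S(3), of f' "D 1 0 t" k] tower[of t z 1] T S by auto
  moreover have "((\<lambda>s. D 0 k s z) has_real_derivative D 1 k t z) (at t)"
    using Dt[of t z 0 k] T S by auto
  moreover have "D 0 k s z = (deriv ^^ k) (f s) z" if "s \<in> T" for s
    using tower[of s z 0] that S D0 by auto
  ultimately show ?thesis
    using has_field_derivative_transform_within_open[OF _ T(1,2), of "\<lambda>s. D 0 k s z"] by simp
qed

lemma has_vector_derivative_xbar:
  fixes x :: "real \<Rightarrow> real \<Rightarrow> real ^ 'n" and e :: "real \<Rightarrow> real ^ 'n"
    and H :: "real ^ 'l \<Rightarrow> real" and I :: "'l \<Rightarrow> 'n \<times> nat"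
  assumes ab: "a < b" and T: "open T" "t \<in> T" and Z: "open Z" "{a..b} \<subseteq> Z"
    and H: "Cinf_Rl H" and R: "\<And>r s. smooth_on {a<..<b} (\<lambda>z. R z $ r $ s)"
    and x: "\<And>i. Cinf2_on (T \<times> Z) (\<lambda>t z. x t z $ i)"
    and e: "is_var_deriv a b (Hfun a b I H) (x t) e" "continuous_on {a..b} e"
    and x': "\<And>z. z \<in> {a<..<b} \<Longrightarrow> ((\<lambda>s. x s z) has_vector_derivative
               (Jop m P e z - Gop mg G (Rmul R (Gadj mg G e)) z)) (at t)"
    and z: "z \<in> {a<..<b}"
  defines "g \<equiv> \<lambda>w. \<chi> p. pdH H p (xbar I (x t) w)"
  shows "((\<lambda>s. xbar I (x s) z) has_vector_derivative
           JJop m P I g z - GGop mg G I (Rmul R (GGadj mg G I g)) z) (at t)"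
proof -
  have S: "open {a<..<b}" "{a<..<b} \<subseteq> Z"
    using Z(2) by auto
  have x_t: "smooth_on Z (\<lambda>w. x t w $ i)" for i
    using Cinf2_on_smooth_on_slice[OF x Z(1) T(2)] .
  have g: "smooth_on Z (\<lambda>w. g w $ q)" for q
    unfolding g_def using smooth_on_Cinf_Rl_compose[OF Cinf_Rl_pdH[OF H] Z(1) smooth_on_xbar[OF x_t]]
    by simp
  have e_eq: "e w = xbar_adj I g w" if "w \<in> {a<..<b}" for w
    unfolding g_def by (rule is_var_deriv_Hfun[OF ab Z H x_t e that])
  have "((\<lambda>s. xbar I (x s) z $ p) has_real_derivative
      (JJop m P I g z - GGop mg G I (Rmul R (GGadj mg G I g)) z) $ p) (at t)" for p
  proof -
    have "((\<lambda>s. (deriv ^^ snd (I p)) (\<lambda>w. x s w $ fst (I p)) z) has_real_derivative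
        (deriv ^^ snd (I p)) (\<lambda>w. (Jop m P e w - Gop mg G (Rmul R (Gadj mg G e)) w) $ fst (I p)) z) (at t)"
      using x' by (intro has_real_derivative_higher_deriv_slice[OF x T Z(1) S z])
        (simp add: has_vector_derivative_vec_iff)
    then show ?thesis
      by (simp only: xbar_component
          higher_deriv_rhs_xbar_adj[OF S(1) e_eq smooth_on_subset[OF S(2) g] R z])
  qed
  then show ?thesis
    by (simp add: has_vector_derivative_vec_iff)
qed

theorem proposition5:
  fixes a b :: real and T Z :: "real set"
    and m mg md :: nat
    and I :: "'l::{finite,linorder} \<Rightarrow> 'n::finite \<times> nat"
    and P :: "nat \<Rightarrow> real ^ 'n::finite ^ 'n::finite"
    and G :: "nat \<Rightarrow> real ^ 'd::finite ^ 'n::finite"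
    and R :: "real \<Rightarrow> real ^ 'd::finite ^ 'd::finite"
    and H :: "real ^ 'l::{finite,linorder} \<Rightarrow> real"
    and x e :: "real \<Rightarrow> real \<Rightarrow> real ^ 'n::finite"
  assumes ab: "a < b"
    and P_sym: "\<forall>j\<le>m. P j = (-1) ^ (j + 1) *\<^sub>R transpose (P j)"
    and R_smooth: "\<forall>r s. Cinf_on {a..b} (\<lambda>z. R z $ r $ s)"
    and R_pos: "\<forall>f::real \<Rightarrow> real ^ 'd::finite. L2_on a b f \<longrightarrow> integral {a..b} (\<lambda>z. f z \<bullet> (R z *v f z)) \<ge> 0"
    and I_inj: "inj I"
    and I_range: "\<forall>p. snd (I p) \<le> md"
    and I_sorted: "mono (\<lambda>p. snd (I p))"
    and H_smooth: "Cinf_Rl H"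
    and T_open: "open T" and Z_open: "open Z" and Z_ab: "{a..b} \<subseteq> Z"
    and x_smooth: "\<forall>i. Cinf2_on (T \<times> Z) (\<lambda>t z. x t z $ i)"
    and e_var: "\<forall>t\<in>T. is_var_deriv a b (Hfun a b I H) (x t) (e t)"
    and e_cont: "\<forall>t\<in>T. continuous_on {a..b} (e t)"
    and x_sol: "\<forall>t\<in>T. \<forall>z\<in>{a<..<b}. ((\<lambda>s. x s z) has_vector_derivative
                  (Jop m P (e t) z - Gop mg G (Rmul R (Gadj mg G (e t))) z)) (at t)"
  shows "(\<forall>t\<in>T. \<forall>z\<in>{a<..<b}.
            ((\<lambda>s. xbar I (x s) z) has_vector_derivative
              (let ebar = (\<lambda>w. \<chi> p. pdH H p (xbar I (x t) w))
               in JJop m P I ebar z - GGop mg G I (Rmul R (GGadj mg G I ebar)) z)) (at t))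
       \<and> (\<forall>u v :: real \<Rightarrow> real ^ 'l::{finite,linorder}. (\<forall>p. test_fun a b (\<lambda>z. u z $ p)) \<longrightarrow>
            (\<forall>p. test_fun a b (\<lambda>z. v z $ p)) \<longrightarrow>
            integral {a..b} (\<lambda>z. u z \<bullet> JJop m P I v z) = - integral {a..b} (\<lambda>z. JJop m P I u z \<bullet> v z))"
proof -
  have R: "smooth_on {a<..<b} (\<lambda>z. R z $ r $ s)" for r s
    using R_smooth Cinf_on_smooth_on_interior by blast
  show ?thesis
    unfolding Let_def using x_smooth e_var e_cont x_sol
    by (intro conjI ballI allI impI has_vector_derivative_xbar[OF ab T_open _ Z_open Z_ab H_smooth R]
        JJop_skew_adjoint[OF P_sym less_imp_le[OF ab]]) auto
qed

end
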